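(* Let $f\in C^2(\mathbb R)$, $G>0$, and let $u:[0,\infty)\times\mathbb R\to\mathbb R$ be continuous with compact support. Assume that through every point of a dense subset of $[0,\infty)\times\mathbb R$ there passes a characteristic curve of $u$, defined on $[0,\infty)$, along which $t\mapsto u(t,\gamma(t))$ is $G$-Lipschitz continuous. Then there exists a Lagrangian parameterization $\chi$ associated with $u$ such that for every $y\in\mathbb R$ the map $t\mapsto u(t,\chi(t,y))$ is $G$-Lipschitz continuous.
   Context: $\lambda(t,x):=f'(u(t,x))$. A characteristic curve of $u$ is an absolutely continuous function $\gamma$ on an interval of $[0,\infty)$ with $\dot\gamma(t)=\lambda(t,\gamma(t))$ for a.e. $t$. A Lagrangian parameterization associated with $u$ is a continuous surjective map $\chi:[0,\infty)\times\mathbb R\to\mathbb R$ such that for every $y$, $t\mapsto\chi(t,y)$ is a characteristic curve defined on $[0,\infty)$, and for every $t$, $y\mapsto\chi(t,y)$ is nondecreasing. *)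

theory Defs
  imports "HOL-Analysis.Analysis"
begin

definition C2 :: "(real \<Rightarrow> real) \<Rightarrow> bool" where
  "C2 f \<longleftrightarrow> (\<exists>f' f''. (\<forall>x. (f has_real_derivative f' x) (at x)) \<and>
                      (\<forall>x. (f' has_real_derivative f'' x) (at x)) \<and> continuous_on UNIV f'')"

definition abs_cont_on_interval :: "(real \<Rightarrow> real) \<Rightarrow> real \<Rightarrow> real \<Rightarrow> bool" where
  "abs_cont_on_interval g a b \<longleftrightarrow>
     (\<forall>e>0. \<exists>d>0. \<forall>(n::nat) (l::nat \<Rightarrow> real) (r::nat \<Rightarrow> real).
        (\<forall>i<n. a \<le> l i \<and> l i \<le> r i \<and> r i \<le> b) \<and>
        (\<forall>i. Suc i < n \<longrightarrow> r i \<le> l (Suc i)) \<and>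
        (\<Sum>i<n. r i - l i) < d
        \<longrightarrow> (\<Sum>i<n. \<bar>g (r i) - g (l i)\<bar>) < e)"

definition abs_cont_on :: "(real \<Rightarrow> real) \<Rightarrow> real set \<Rightarrow> bool" where
  "abs_cont_on g I \<longleftrightarrow> (\<forall>a b. {a..b} \<subseteq> I \<longrightarrow> abs_cont_on_interval g a b)"

definition char_curve :: "(real \<Rightarrow> real) \<Rightarrow> (real \<Rightarrow> real \<Rightarrow> real) \<Rightarrow> (real \<Rightarrow> real) \<Rightarrow> bool" where
  "char_curve f u \<gamma> \<longleftrightarrow> abs_cont_on \<gamma> {0..} \<and>
     (AE t in lebesgue. 0 \<le> t \<longrightarrow> (\<gamma> has_real_derivative deriv f (u t (\<gamma> t))) (at t))"

definition lagrangian_param :: "(real \<Rightarrow> real) \<Rightarrow> (real \<Rightarrow> real \<Rightarrow> real) \<Rightarrow> (real \<Rightarrow> real \<Rightarrow> real) \<Rightarrow> bool" where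
  "lagrangian_param f u X \<longleftrightarrow>
     continuous_on ({0..} \<times> UNIV) (\<lambda>(t,y). X t y) \<and>
     (\<lambda>(t,y). X t y) ` ({0..} \<times> UNIV) = UNIV \<and>
     (\<forall>y. char_curve f u (\<lambda>t. X t y)) \<and>
     (\<forall>t\<ge>0. mono (X t))"

end

(*
  Admissible curves are classical characteristics (the speed f'(u) is continuous, so
  Caratheodory characteristics are C^1) along which u is G-Lipschitz; they are closed under
  pointwise max, min and pointwise limits.  By Hausdorff's maximal principle there is a maximal
  totally ordered family of admissible curves.  Since u vanishes for t >= T, the speed is then
  independent of position, so the area \<integral>_0^T \<gamma> is strictly increasing along the family.
  A gap argument, using the density of points lying on admissible curves, shows that the
  family passes through every point of [0,\<infinity>) \<times> \<real> and realises every area.  Labelling each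
  curve by its area gives \<chi>: it is monotone and onto in y, hence continuous in y, and uniformly
  Lipschitz in t.
*)

theory Submission
  imports Defs
begin

section \<open>Absolute continuity\<close>

lemma negligible_imp_small_open_superset:
  assumes "negligible N" "e > 0"
  obtains W where "open W" "N \<subseteq> W" "W \<in> lmeasurable" "measure lebesgue W < e"
proof -
  obtain T where T: "open T" "N \<subseteq> T" "T - N \<in> lmeasurable" "emeasure lebesgue (T - N) < ennreal e"
    using sets_lebesgue_outer_open[OF negligible_imp_sets[OF assms(1)] assms(2)] by blast
  have N: "N \<in> lmeasurable" "measure lebesgue N = 0"
    using assms(1) by (simp_all add: negligible_iff_null_sets null_sets_def fmeasurableI
        negligible_imp_measure0)
  have T_eq: "T = (T - N) \<union> N" using T by auto
  have "T \<in> lmeasurable" by (subst T_eq) (intro fmeasurable.Un T(3) N(1))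
  moreover have "measure lebesgue (T - N) < e"
    using T(3,4) by (simp add: emeasure_eq_measure2 ennreal_less_iff)
  then have "measure lebesgue T < e"
    using measure_Un_le[of "T - N" lebesgue N] T(3) N T_eq by auto
  ultimately show ?thesis using that T by blast
qed

lemma sum_list_interval_lengths_le_measure:
  fixes I :: "(real \<times> real) list"
  assumes sorted: "sorted_wrt (\<lambda>p q. snd p \<le> fst q) I"
    and inside: "\<And>l r. (l, r) \<in> set I \<Longrightarrow> l \<le> r \<and> {l..r} \<subseteq> W" and W: "W \<in> lmeasurable"
  shows "(\<Sum>(l, r)\<leftarrow>I. r - l) \<le> measure lebesgue W"
proof -
  define l r where "l i = fst (I ! i)" and "r i = snd (I ! i)" for i
  have lr: "l i \<le> r i" "{l i..r i} \<subseteq> W" if "i < length I" for i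
    using inside[of "l i" "r i"] that by (auto simp: l_def r_def)
  have disj: "disjoint_family_on (\<lambda>i. {l i<..<r i}) {..<length I}"
  proof (unfold disjoint_family_on_def, intro ballI impI)
    fix i j assume "i \<in> {..<length I}" "j \<in> {..<length I}" "i \<noteq> j"
    then have "r i \<le> l j \<or> r j \<le> l i"
      using sorted by (auto simp: sorted_wrt_iff_nth_less l_def r_def elim!: neqE)
    then show "{l i<..<r i} \<inter> {l j<..<r j} = {}" by auto
  qed
  have "(\<Sum>(l, r)\<leftarrow>I. r - l) = (\<Sum>i<length I. measure lebesgue {l i<..<r i})"
    using lr by (simp add: sum_list_sum_nth atLeast0LessThan case_prod_beta l_def r_def)
  also have "\<dots> = measure lebesgue (\<Union>i<length I. {l i<..<r i})"
    by (rule measure_finite_Union[symmetric]) (use disj lr in auto)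
  also have "\<dots> \<le> measure lebesgue W"
    using lr by (intro measure_mono_fmeasurable W) (auto, fastforce)
  finally show ?thesis .
qed

lemma abs_cont_on_intervalD:
  assumes "abs_cont_on_interval g a b" "e > 0"
  obtains d where "d > 0"
    "\<And>I. sorted_wrt (\<lambda>p q. snd p \<le> fst q) I \<Longrightarrow> (\<forall>(l, r)\<in>set I. a \<le> l \<and> l \<le> r \<and> r \<le> b) \<Longrightarrow>
       (\<Sum>(l, r)\<leftarrow>I. r - l) < d \<Longrightarrow> (\<Sum>(l, r)\<leftarrow>I. \<bar>g r - g l\<bar>) < e"
proof -
  obtain d where d: "d > 0" and small0: "\<forall>n l r. (\<forall>i<n. a \<le> l i \<and> l i \<le> r i \<and> r i \<le> b) \<and>
      (\<forall>i. Suc i < n \<longrightarrow> r i \<le> l (Suc i)) \<and> (\<Sum>i<n. r i - l i) < d \<longrightarrow>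
      (\<Sum>i<n. \<bar>g (r i) - g (l i)\<bar>) < e"
    using assms unfolding abs_cont_on_interval_def by blast
  note small = small0[rule_format]
  show ?thesis
  proof (rule that[OF d])
    fix I :: "(real \<times> real) list"
    assume sorted: "sorted_wrt (\<lambda>p q. snd p \<le> fst q) I"
      and inside: "\<forall>(l, r)\<in>set I. a \<le> l \<and> l \<le> r \<and> r \<le> b" and short: "(\<Sum>(l, r)\<leftarrow>I. r - l) < d"
    have "\<forall>i<length I. a \<le> fst (I ! i) \<and> fst (I ! i) \<le> snd (I ! i) \<and> snd (I ! i) \<le> b"
    proof (intro allI impI)
      fix i assume "i < length I"
      then have "I ! i \<in> set I" by simp
      with inside show "a \<le> fst (I ! i) \<and> fst (I ! i) \<le> snd (I ! i) \<and> snd (I ! i) \<le> b"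
        by (cases "I ! i") auto
    qed
    moreover have "\<forall>i. Suc i < length I \<longrightarrow> snd (I ! i) \<le> fst (I ! Suc i)"
      using sorted by (simp add: sorted_wrt_iff_nth_less)
    moreover have "(\<Sum>i<length I. snd (I ! i) - fst (I ! i)) < d"
      using short by (simp add: sum_list_sum_nth atLeast0LessThan case_prod_beta)
    ultimately have "(\<Sum>i<length I. \<bar>g (snd (I ! i)) - g (fst (I ! i))\<bar>) < e"
      by (rule small[OF conjI[OF _ conjI]])
    then show "(\<Sum>(l, r)\<leftarrow>I. \<bar>g r - g l\<bar>) < e"
      by (simp add: sum_list_sum_nth atLeast0LessThan case_prod_beta)
  qed
qed

text \<open>Creeping along \<open>[a, b]\<close> with Bolzano's principle: points outside \<open>N\<close> contribute at most
  \<open>\<epsilon>\<close> times the length covered, points of \<open>N\<close> are swallowed by short intervals inside \<open>W\<close>.\<close>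
lemma increment_le_interval_cover:
  fixes g :: "real \<Rightarrow> real"
  assumes ab: "a \<le> b" and W: "open W" "N \<subseteq> W" and \<epsilon>: "\<epsilon> > 0"
    and der: "\<And>x. x \<in> {a..b} \<Longrightarrow> x \<notin> N \<Longrightarrow> (g has_real_derivative 0) (at x)"
  obtains I where "sorted_wrt (\<lambda>p q. snd p \<le> fst q) I"
    "\<forall>(l, r)\<in>set I. a \<le> l \<and> l \<le> r \<and> r \<le> b \<and> {l..r} \<subseteq> W"
    "\<bar>g b - g a\<bar> \<le> \<epsilon> * (b - a) + (\<Sum>(l, r)\<leftarrow>I. \<bar>g r - g l\<bar>)"
proof -
  define P where "P p q \<longleftrightarrow> (\<exists>I. sorted_wrt (\<lambda>p q. snd p \<le> fst q) I \<and>
      (\<forall>(l, r)\<in>set I. p \<le> l \<and> l \<le> r \<and> r \<le> q \<and> {l..r} \<subseteq> W) \<and>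
      \<bar>g q - g p\<bar> \<le> \<epsilon> * (q - p) + (\<Sum>(l, r)\<leftarrow>I. \<bar>g r - g l\<bar>))" for p q
  have "P a b"
    using ab
  proof (induction rule: Bolzano)
    case (trans p q s)
    then obtain I J where
      I: "sorted_wrt (\<lambda>p q. snd p \<le> fst q) I" "\<forall>(l, r)\<in>set I. p \<le> l \<and> l \<le> r \<and> r \<le> q \<and> {l..r} \<subseteq> W"
        "\<bar>g q - g p\<bar> \<le> \<epsilon> * (q - p) + (\<Sum>(l, r)\<leftarrow>I. \<bar>g r - g l\<bar>)" and
      J: "sorted_wrt (\<lambda>p q. snd p \<le> fst q) J" "\<forall>(l, r)\<in>set J. q \<le> l \<and> l \<le> r \<and> r \<le> s \<and> {l..r} \<subseteq> W"
        "\<bar>g s - g q\<bar> \<le> \<epsilon> * (s - q) + (\<Sum>(l, r)\<leftarrow>J. \<bar>g r - g l\<bar>)"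
      unfolding P_def by blast
    have "sorted_wrt (\<lambda>p q. snd p \<le> fst q) (I @ J)"
      using I(1,2) J(1,2) by (fastforce simp: sorted_wrt_append)
    moreover have "\<forall>(l, r)\<in>set (I @ J). p \<le> l \<and> l \<le> r \<and> r \<le> s \<and> {l..r} \<subseteq> W"
      using I(2) J(2) trans.hyps by fastforce
    moreover have "\<bar>g s - g p\<bar> \<le> \<epsilon> * (s - p) + (\<Sum>(l, r)\<leftarrow>I @ J. \<bar>g r - g l\<bar>)"
      using I(3) J(3) by (simp add: algebra_simps)
    ultimately show ?case unfolding P_def by blast
  next
    case (local x)
    show ?case
    proof (cases "x \<in> N")
      case True
      then obtain \<delta> where "\<delta> > 0" and \<delta>: "ball x \<delta> \<subseteq> W" using W open_contains_ball by blast
      have "P p q" if "p \<le> x" "x \<le> q" "q - p < \<delta>" for p q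
      proof -
        have "{p..q} \<subseteq> ball x \<delta>" using that by (auto simp: dist_real_def)
        with \<delta> that \<epsilon> show ?thesis
          unfolding P_def by (intro exI[of _ "[(p, q)]"]) auto
      qed
      with \<open>\<delta> > 0\<close> show ?thesis by blast
    next
      case False
      then have "(g has_derivative (*) 0) (at x)"
        using der local by (simp add: has_field_derivative_def)
      then obtain \<delta> where "\<delta> > 0" and \<delta>: "\<And>y. \<bar>y - x\<bar> < \<delta> \<Longrightarrow> \<bar>g y - g x\<bar> \<le> \<epsilon> * \<bar>y - x\<bar>"
        using \<epsilon> unfolding has_derivative_at_alt by force
      have "P p q" if "p \<le> x" "x \<le> q" "q - p < \<delta>" for p q
      proof -
        have "\<bar>g q - g p\<bar> \<le> \<bar>g q - g x\<bar> + \<bar>g p - g x\<bar>" by linarith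
        also have "\<dots> \<le> \<epsilon> * (q - p)"
          using \<delta>[of q] \<delta>[of p] that by (simp add: algebra_simps)
        finally show ?thesis unfolding P_def by (intro exI[of _ "[]"]) simp
      qed
      with \<open>\<delta> > 0\<close> show ?thesis by blast
    qed
  qed
  then show ?thesis using that unfolding P_def by blast
qed

lemma abs_cont_increment_le:
  fixes g :: "real \<Rightarrow> real"
  assumes ac: "abs_cont_on_interval g a b" and ab: "a \<le> b" and N: "negligible N" and \<epsilon>: "\<epsilon> > 0"
    and der: "\<And>x. x \<in> {a..b} \<Longrightarrow> x \<notin> N \<Longrightarrow> (g has_real_derivative 0) (at x)"
  shows "\<bar>g b - g a\<bar> \<le> \<epsilon> * (b - a) + \<epsilon>"
proof -
  obtain d where d: "d > 0" and small: "\<And>I. sorted_wrt (\<lambda>p q. snd p \<le> fst q) I \<Longrightarrow>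
      (\<forall>(l, r)\<in>set I. a \<le> l \<and> l \<le> r \<and> r \<le> b) \<Longrightarrow> (\<Sum>(l, r)\<leftarrow>I. r - l) < d \<Longrightarrow>
      (\<Sum>(l, r)\<leftarrow>I. \<bar>g r - g l\<bar>) < \<epsilon>"
    using abs_cont_on_intervalD[OF ac \<epsilon>] by blast
  obtain W where W: "open W" "N \<subseteq> W" "W \<in> lmeasurable" "measure lebesgue W < d"
    using negligible_imp_small_open_superset[OF N d] by blast
  obtain I where
    I: "sorted_wrt (\<lambda>p q. snd p \<le> fst q) I" "\<forall>(l, r)\<in>set I. a \<le> l \<and> l \<le> r \<and> r \<le> b \<and> {l..r} \<subseteq> W"
      "\<bar>g b - g a\<bar> \<le> \<epsilon> * (b - a) + (\<Sum>(l, r)\<leftarrow>I. \<bar>g r - g l\<bar>)"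
    using increment_le_interval_cover[OF ab W(1,2) \<epsilon> der] by blast
  have "(\<Sum>(l, r)\<leftarrow>I. r - l) < d"
    using sum_list_interval_lengths_le_measure[OF I(1) _ W(3)] I(2) W(4) by fastforce
  then have "(\<Sum>(l, r)\<leftarrow>I. \<bar>g r - g l\<bar>) < \<epsilon>"
    using small[OF I(1)] I(2) by fastforce
  with I(3) show ?thesis by simp
qed

lemma abs_cont_derivative_zero_ae_imp_const:
  fixes g :: "real \<Rightarrow> real"
  assumes ac: "abs_cont_on_interval g a b" and ab: "a \<le> b" and N: "negligible N"
    and der: "\<And>x. x \<in> {a..b} \<Longrightarrow> x \<notin> N \<Longrightarrow> (g has_real_derivative 0) (at x)"
  shows "g b = g a"
proof (rule ccontr)
  assume "g b \<noteq> g a"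
  define \<epsilon> where "\<epsilon> = \<bar>g b - g a\<bar> / (2 * (b - a + 1))"
  have "\<epsilon> > 0" using \<open>g b \<noteq> g a\<close> ab by (simp add: \<epsilon>_def)
  moreover have "\<epsilon> * (b - a + 1) = \<bar>g b - g a\<bar> / 2" using ab by (simp add: \<epsilon>_def field_simps)
  ultimately show False
    using abs_cont_increment_le[OF ac ab N _ der, of \<epsilon>] \<open>g b \<noteq> g a\<close> by (simp add: algebra_simps)
qed

lemma lipschitz_imp_abs_cont_on_interval:
  assumes "lipschitz_on L {a..b} F"
  shows "abs_cont_on_interval F a b"
  unfolding abs_cont_on_interval_def
proof (intro allI impI)
  fix e :: real assume "e > 0"
  have L: "L \<ge> 0" using assms by (simp add: lipschitz_on_def)
  have F: "\<bar>F y - F x\<bar> \<le> (L + 1) * (y - x)" if "a \<le> x" "x \<le> y" "y \<le> b" for x y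
  proof -
    have "\<bar>F y - F x\<bar> \<le> L * (y - x)"
      using lipschitz_onD[OF assms, of y x] that by (simp add: dist_real_def)
    also have "\<dots> \<le> (L + 1) * (y - x)" using that by (simp add: algebra_simps)
    finally show ?thesis .
  qed
  show "\<exists>d>0. \<forall>n l r. (\<forall>i<n. a \<le> l i \<and> l i \<le> r i \<and> r i \<le> b) \<and>
      (\<forall>i. Suc i < n \<longrightarrow> r i \<le> l (Suc i)) \<and> (\<Sum>i<n. r i - l i) < d \<longrightarrow>
      (\<Sum>i<n. \<bar>F (r i) - F (l i)\<bar>) < e"
  proof (intro exI[of _ "e / (L + 1)"] conjI allI impI)
    fix n l r
    assume H: "(\<forall>i<n. a \<le> l i \<and> l i \<le> r i \<and> r i \<le> b) \<and>
      (\<forall>i. Suc i < n \<longrightarrow> r i \<le> l (Suc i)) \<and> (\<Sum>i<n. r i - l i) < e / (L + 1)"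
    have "(\<Sum>i<n. \<bar>F (r i) - F (l i)\<bar>) \<le> (\<Sum>i<n. (L + 1) * (r i - l i))"
      using H F by (intro sum_mono) simp
    also have "\<dots> = (L + 1) * (\<Sum>i<n. r i - l i)" by (simp add: sum_distrib_left)
    also have "\<dots> < e" using H L by (simp add: field_simps)
    finally show "(\<Sum>i<n. \<bar>F (r i) - F (l i)\<bar>) < e" .
  qed (use \<open>e > 0\<close> L in auto)
qed

lemma abs_cont_on_interval_diff:
  assumes g: "abs_cont_on_interval g a b" and F: "abs_cont_on_interval F a b"
  shows "abs_cont_on_interval (\<lambda>s. g s - F s) a b"
  unfolding abs_cont_on_interval_def
proof (intro allI impI)
  fix e :: real assume "e > 0"
  then have "e / 2 > 0" by simp
  from g[unfolded abs_cont_on_interval_def, rule_format, OF this]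
       F[unfolded abs_cont_on_interval_def, rule_format, OF this]
  obtain d1 d2 where d: "d1 > 0" "d2 > 0" and
    small_g: "\<And>n l r. (\<forall>i<n. a \<le> l i \<and> l i \<le> r i \<and> r i \<le> b) \<and>
      (\<forall>i. Suc i < n \<longrightarrow> r i \<le> l (Suc i)) \<and> (\<Sum>i<n. r i - l i) < d1 \<Longrightarrow>
      (\<Sum>i<n. \<bar>g (r i) - g (l i)\<bar>) < e / 2" and
    small_F: "\<And>n l r. (\<forall>i<n. a \<le> l i \<and> l i \<le> r i \<and> r i \<le> b) \<and>
      (\<forall>i. Suc i < n \<longrightarrow> r i \<le> l (Suc i)) \<and> (\<Sum>i<n. r i - l i) < d2 \<Longrightarrow>
      (\<Sum>i<n. \<bar>F (r i) - F (l i)\<bar>) < e / 2"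
    by blast
  show "\<exists>d>0. \<forall>n l r. (\<forall>i<n. a \<le> l i \<and> l i \<le> r i \<and> r i \<le> b) \<and>
      (\<forall>i. Suc i < n \<longrightarrow> r i \<le> l (Suc i)) \<and> (\<Sum>i<n. r i - l i) < d \<longrightarrow>
      (\<Sum>i<n. \<bar>g (r i) - F (r i) - (g (l i) - F (l i))\<bar>) < e"
  proof (intro exI[of _ "min d1 d2"] conjI allI impI)
    fix n l r
    assume H: "(\<forall>i<n. a \<le> l i \<and> l i \<le> r i \<and> r i \<le> b) \<and>
      (\<forall>i. Suc i < n \<longrightarrow> r i \<le> l (Suc i)) \<and> (\<Sum>i<n. r i - l i) < min d1 d2"
    have "(\<Sum>i<n. \<bar>g (r i) - F (r i) - (g (l i) - F (l i))\<bar>)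
        \<le> (\<Sum>i<n. \<bar>g (r i) - g (l i)\<bar> + \<bar>F (r i) - F (l i)\<bar>)"
      by (intro sum_mono) linarith
    also have "\<dots> < e"
      using small_g[of n l r] small_F[of n l r] H by (simp add: sum.distrib)
    finally show "(\<Sum>i<n. \<bar>g (r i) - F (r i) - (g (l i) - F (l i))\<bar>) < e" .
  qed (use d in simp)
qed

lemma abs_cont_on_interval_imp_continuous_on:
  assumes "abs_cont_on_interval g a b"
  shows "continuous_on {a..b} g"
  unfolding continuous_on_iff
proof (intro ballI allI impI)
  fix x e assume x: "x \<in> {a..b}" and "(0::real) < e"
  then obtain d where "d > 0" and small: "\<And>I. sorted_wrt (\<lambda>p q. snd p \<le> fst q) I \<Longrightarrow>
      (\<forall>(l, r)\<in>set I. a \<le> l \<and> l \<le> r \<and> r \<le> b) \<Longrightarrow> (\<Sum>(l, r)\<leftarrow>I. r - l) < d \<Longrightarrow>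
      (\<Sum>(l, r)\<leftarrow>I. \<bar>g r - g l\<bar>) < e"
    using abs_cont_on_intervalD[OF assms] by blast
  have "dist (g y) (g x) < e" if "y \<in> {a..b}" "dist y x < d" for y
    using small[of "[(min x y, max x y)]"] x that
    by (cases "x \<le> y") (auto simp: dist_real_def abs_minus_commute)
  with \<open>d > 0\<close> show "\<exists>d>0. \<forall>y\<in>{a..b}. dist y x < d \<longrightarrow> dist (g y) (g x) < e" by blast
qed

lemma has_real_derivative_select:
  fixes f1 f2 g :: "real \<Rightarrow> real"
  assumes d1: "(f1 has_real_derivative c) (at t)" and d2: "(f2 has_real_derivative c) (at t)"
    and eq: "f1 t = f2 t" and g: "\<And>y. g y = f1 y \<or> g y = f2 y"
  shows "(g has_real_derivative c) (at t)"
proof -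
  have approx: "\<exists>d>0. \<forall>y. norm (y - t) < d \<longrightarrow> norm (f y - f t - c * (y - t)) \<le> e * norm (y - t)"
    if "(f has_real_derivative c) (at t)" "e > 0" for f e
    using that unfolding has_field_derivative_def has_derivative_at_alt by blast
  have "\<exists>d>0. \<forall>y. norm (y - t) < d \<longrightarrow> norm (g y - g t - c * (y - t)) \<le> e * norm (y - t)"
    if "e > 0" for e
  proof -
    obtain d1 d2 where "d1 > 0" "d2 > 0"
      and "\<forall>y. norm (y - t) < d1 \<longrightarrow> norm (f1 y - f1 t - c * (y - t)) \<le> e * norm (y - t)"
      and "\<forall>y. norm (y - t) < d2 \<longrightarrow> norm (f2 y - f2 t - c * (y - t)) \<le> e * norm (y - t)"
      using approx[OF d1 \<open>e > 0\<close>] approx[OF d2 \<open>e > 0\<close>] by blast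
    then show ?thesis
      using g eq by (intro exI[of _ "min d1 d2"]) (metis min_less_iff_conj)
  qed
  then show ?thesis
    unfolding has_field_derivative_def has_derivative_at_alt by (simp add: bounded_linear_mult_right)
qed

lemma has_real_derivative_switch:
  fixes f1 f2 d :: "real \<Rightarrow> real"
  assumes d1: "(f1 has_real_derivative c1) (at t)" and d2: "(f2 has_real_derivative c2) (at t)"
    and d: "isCont d t" and agree: "d t = 0 \<Longrightarrow> f1 t = f2 t \<and> c1 = c2"
  shows "((\<lambda>y. if 0 \<le> d y then f1 y else f2 y) has_real_derivative (if 0 \<le> d t then c1 else c2)) (at t)"
proof (cases "d t = 0")
  case True
  then show ?thesis
    using has_real_derivative_select[OF d1, of f2] d2 agree by auto
next
  case False
  then consider "d t > 0" | "d t < 0" by linarith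
  then show ?thesis
  proof cases
    case 1
    then have "\<forall>\<^sub>F y in nhds t. d y > 0"
      using d by (simp add: isCont_def order_tendstoD(1) eventually_nhds_conv_at)
    then have ev: "\<forall>\<^sub>F y in nhds t. (if 0 \<le> d y then f1 y else f2 y) = f1 y"
      by eventually_elim simp
    have "((\<lambda>y. if 0 \<le> d y then f1 y else f2 y) has_real_derivative c1) (at t)"
      using DERIV_cong_ev[OF refl ev refl] d1 by simp
    with 1 show ?thesis by simp
  next
    case 2
    then have "\<forall>\<^sub>F y in nhds t. d y < 0"
      using d by (simp add: isCont_def order_tendstoD(2) eventually_nhds_conv_at)
    then have ev: "\<forall>\<^sub>F y in nhds t. (if 0 \<le> d y then f1 y else f2 y) = f2 y"
      by eventually_elim simp
    have "((\<lambda>y. if 0 \<le> d y then f1 y else f2 y) has_real_derivative c2) (at t)"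
      using DERIV_cong_ev[OF refl ev refl] d2 by simp
    with 2 show ?thesis by simp
  qed
qed

lemma is_interval_atLeast: "is_interval {a::real..}"
  unfolding is_interval_1 by auto

lemma lipschitz_on_switch:
  fixes \<phi>1 \<phi>2 d :: "real \<Rightarrow> real"
  assumes l1: "lipschitz_on L S \<phi>1" and l2: "lipschitz_on L S \<phi>2" and S: "is_interval S"
    and d: "continuous_on S d" and agree: "\<And>t. t \<in> S \<Longrightarrow> d t = 0 \<Longrightarrow> \<phi>1 t = \<phi>2 t"
  shows "lipschitz_on L S (\<lambda>t. if 0 \<le> d t then \<phi>1 t else \<phi>2 t)"
proof -
  define \<phi> where "\<phi> t = (if 0 \<le> d t then \<phi>1 t else \<phi>2 t)" for t
  have L: "L \<ge> 0" using l1 by (simp add: lipschitz_on_def)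
  have lip: "\<bar>\<psi> y - \<psi> x\<bar> \<le> L * (y - x)"
    if "lipschitz_on L S \<psi>" "x \<in> S" "y \<in> S" "x \<le> y" for \<psi> x y
    using lipschitz_onD[OF that(1), of y x] that by (simp add: dist_real_def)
  have key: "\<bar>\<phi> y - \<phi> x\<bar> \<le> L * (y - x)" if xy: "x \<in> S" "y \<in> S" "x \<le> y" for x y
  proof -
    have sub: "{x..y} \<subseteq> S"
      using S xy unfolding is_interval_1 by (meson atLeastAtMost_iff subsetI)
    have via: "\<bar>\<phi> y - \<phi> x\<bar> \<le> L * (y - x)" if z: "x \<le> z" "z \<le> y" "d z = 0" for z
    proof -
      have "z \<in> S" using sub z by auto
      then have "\<bar>\<phi> z - \<phi> x\<bar> \<le> L * (z - x)" "\<bar>\<phi> y - \<phi> z\<bar> \<le> L * (y - z)"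
        using lip[OF l1, of x z] lip[OF l2, of x z] lip[OF l1, of z y] lip[OF l2, of z y]
          agree[of z] xy z by (auto simp: \<phi>_def)
      then show ?thesis by (simp add: algebra_simps)
    qed
    have dc: "continuous_on {x..y} d" using d sub by (rule continuous_on_subset)
    consider "0 \<le> d x" "0 \<le> d y" | "d x < 0" "d y < 0" | "0 \<le> d x" "d y < 0" | "d x < 0" "0 \<le> d y"
      by linarith
    then show ?thesis
    proof cases
      case 3
      then obtain z where "x \<le> z" "z \<le> y" "d z = 0" using IVT2'[of d y 0 x] xy dc by auto
      then show ?thesis by (rule via)
    next
      case 4
      then obtain z where "x \<le> z" "z \<le> y" "d z = 0" using IVT'[of d x 0 y] xy dc by auto
      then show ?thesis by (rule via)
    qed (use lip[OF l1, of x y] lip[OF l2, of x y] xy in \<open>auto simp: \<phi>_def\<close>)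
  qed
  show ?thesis unfolding lipschitz_on_def \<phi>_def[symmetric]
  proof (intro conjI L ballI)
    fix x y assume "x \<in> S" "y \<in> S"
    then show "dist (\<phi> x) (\<phi> y) \<le> L * dist x y"
      using key[of x y] key[of y x] by (cases "x \<le> y") (auto simp: dist_real_def abs_minus_commute)
  qed
qed

lemma lipschitz_on_tendsto:
  fixes F :: "nat \<Rightarrow> real \<Rightarrow> real"
  assumes "\<And>n. lipschitz_on L S (F n)" and "\<And>x. x \<in> S \<Longrightarrow> (\<lambda>n. F n x) \<longlonglongrightarrow> \<phi> x"
  shows "lipschitz_on L S \<phi>"
  unfolding lipschitz_on_def
proof (intro conjI ballI)
  show "0 \<le> L" using assms(1)[of 0] by (simp add: lipschitz_on_def)
  fix x y assume "x \<in> S" "y \<in> S"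
  then have "(\<lambda>n. dist (F n x) (F n y)) \<longlonglongrightarrow> dist (\<phi> x) (\<phi> y)"
    by (intro tendsto_dist assms(2))
  then show "dist (\<phi> x) (\<phi> y) \<le> L * dist x y"
    by (rule LIMSEQ_le_const2) (use lipschitz_onD[OF assms(1) \<open>x \<in> S\<close> \<open>y \<in> S\<close>] in blast)
qed

lemma continuous_on_Times_lipschitz_on_fst:
  fixes F :: "'a::metric_space \<Rightarrow> 'b::metric_space \<Rightarrow> 'c::metric_space"
  assumes lip: "\<And>y. y \<in> B \<Longrightarrow> lipschitz_on L A (\<lambda>x. F x y)"
    and cont: "\<And>x. x \<in> A \<Longrightarrow> continuous_on B (F x)"
  shows "continuous_on (A \<times> B) (\<lambda>(x, y). F x y)"
  unfolding continuous_on_iff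
proof (intro ballI allI impI)
  fix p e assume p: "p \<in> A \<times> B" and "(0::real) < e"
  obtain x y where xy: "p = (x, y)" "x \<in> A" "y \<in> B" using p by auto
  obtain d where "d > 0" and d: "\<And>y'. y' \<in> B \<Longrightarrow> dist y' y < d \<Longrightarrow> dist (F x y') (F x y) < e / 2"
    using cont[OF xy(2)] xy(3) \<open>e > 0\<close> unfolding continuous_on_iff by (metis half_gt_zero)
  have L: "L \<ge> 0" using lip[OF xy(3)] by (simp add: lipschitz_on_def)
  define d' where "d' = min d (e / (2 * (L + 1)))"
  have "d' > 0" using \<open>d > 0\<close> \<open>e > 0\<close> L by (simp add: d'_def)
  moreover have "dist (F x' y') (F x y) < e" if "(x', y') \<in> A \<times> B" "dist (x', y') (x, y) < d'" for x' y'
  proof -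
    have dx: "dist x' x < d'" and dy: "dist y' y < d'"
      using that dist_fst_le[of "(x', y')" "(x, y)"] dist_snd_le[of "(x', y')" "(x, y)"] by auto
    have "dist (F x' y') (F x y') \<le> L * dist x' x"
      using lipschitz_onD[OF lip] that xy by auto
    also have "\<dots> \<le> L * (e / (2 * (L + 1)))"
      using dx L by (intro mult_left_mono) (auto simp: d'_def)
    also have "\<dots> < e / 2" using L \<open>e > 0\<close> by (simp add: field_simps)
    finally have "dist (F x' y') (F x y') < e / 2" .
    moreover have "dist (F x y') (F x y) < e / 2" using d[of y'] that dy by (auto simp: d'_def)
    ultimately show ?thesis using dist_triangle[of "F x' y'" "F x y" "F x y'"] by linarith
  qed
  ultimately show "\<exists>d>0. \<forall>p'\<in>A \<times> B. dist p' p < d \<longrightarrow> dist ((\<lambda>(x, y). F x y) p') ((\<lambda>(x, y). F x y) p) < e"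
    using xy(1) by (intro exI[of _ d']) auto
qed

lemma running_sup_in_chain:
  fixes g :: "nat \<Rightarrow> 'a::lattice"
  assumes total: "\<And>x y. x \<in> L \<Longrightarrow> y \<in> L \<Longrightarrow> x \<le> y \<or> y \<le> x" and g: "\<And>n. g n \<in> L"
  obtains \<rho> where "\<And>n. \<rho> n \<in> L" "\<And>n. \<rho> n \<le> \<rho> (Suc n)" "\<And>n. g n \<le> \<rho> n"
proof
  define \<rho> where "\<rho> = rec_nat (g 0) (\<lambda>n r. sup r (g (Suc n)))"
  have \<rho>_simps: "\<rho> 0 = g 0" "\<rho> (Suc n) = sup (\<rho> n) (g (Suc n))" for n
    by (simp_all add: \<rho>_def)
  show "\<rho> n \<in> L" for n
  proof (induction n)
    case (Suc n)
    then have "\<rho> (Suc n) = g (Suc n) \<or> \<rho> (Suc n) = \<rho> n"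
      using total[OF Suc g] by (metis \<rho>_simps(2) sup_absorb1 sup_absorb2)
    then show ?case using Suc g by auto
  qed (simp add: \<rho>_simps g)
  show "\<rho> n \<le> \<rho> (Suc n)" "g n \<le> \<rho> n" for n
    by (simp add: \<rho>_simps) (cases n, simp_all add: \<rho>_simps)
qed

lemma chain_Sup_limit:
  fixes C L :: "('a \<Rightarrow> real) set" and P :: "('a \<Rightarrow> real) \<Rightarrow> real"
  assumes total: "\<And>\<gamma> \<eta>. \<gamma> \<in> C \<Longrightarrow> \<eta> \<in> C \<Longrightarrow> \<gamma> \<le> \<eta> \<or> \<eta> \<le> \<gamma>"
    and strict: "\<And>\<gamma> \<eta>. \<gamma> \<in> C \<Longrightarrow> \<eta> \<in> C \<Longrightarrow> \<gamma> < \<eta> \<Longrightarrow> P \<gamma> < P \<eta>"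
    and closed: "\<And>\<rho> \<eta>. (\<And>n. \<rho> n \<in> C) \<Longrightarrow> (\<And>x. (\<lambda>n. \<rho> n x) \<longlonglongrightarrow> \<eta> x) \<Longrightarrow>
      \<eta> \<in> C \<and> (\<lambda>n. P (\<rho> n)) \<longlonglongrightarrow> P \<eta>"
    and L: "L \<subseteq> C" "L \<noteq> {}" "bdd_above (P ` L)" and bdd: "\<And>x. bdd_above ((\<lambda>\<gamma>. \<gamma> x) ` L)"
  obtains \<eta> \<rho> where "\<eta> \<in> C" "\<And>\<gamma>. \<gamma> \<in> L \<Longrightarrow> \<gamma> \<le> \<eta>" "\<And>n. \<rho> n \<in> L" "\<And>x. (\<lambda>n. \<rho> n x) \<longlonglongrightarrow> \<eta> x"
proof -
  have mono: "P \<gamma> \<le> P \<eta>" if "\<gamma> \<in> C" "\<eta> \<in> C" "\<gamma> \<le> \<eta>" for \<gamma> \<eta>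
    using strict[OF that(1,2)] that(3) by (cases "\<gamma> = \<eta>") (auto simp: less_le)
  define s where "s = Sup (P ` L)"
  have "\<exists>\<gamma>\<in>L. s - 1 / Suc n < P \<gamma>" for n
    using less_cSup_iff[of "P ` L" "s - 1 / Suc n"] L by (auto simp: s_def)
  then obtain g where g: "\<And>n. g n \<in> L" "\<And>n. s - 1 / Suc n < P (g n)" by metis
  obtain \<rho> where \<rho>L: "\<And>n. \<rho> n \<in> L" and \<rho>_Suc: "\<And>n. \<rho> n \<le> \<rho> (Suc n)"
    and g_le: "\<And>n. g n \<le> \<rho> n"
    using running_sup_in_chain[of L g] total g(1) L(1) by (metis subsetD)
  have inc: "incseq (\<lambda>n. \<rho> n x)" for x using \<rho>_Suc by (intro incseq_SucI) (simp add: le_fun_def)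
  define \<eta> where "\<eta> x = lim (\<lambda>n. \<rho> n x)" for x
  have lim: "(\<lambda>n. \<rho> n x) \<longlonglongrightarrow> \<eta> x" for x
  proof -
    obtain B where "\<And>\<gamma>. \<gamma> \<in> L \<Longrightarrow> \<gamma> x \<le> B" using bdd[of x] by (auto simp: bdd_above_def)
    then have "\<forall>n. \<rho> n x \<le> B" using \<rho>L by blast
    with incseq_convergent[OF inc] show ?thesis by (metis \<eta>_def limI)
  qed
  have \<eta>C: "\<eta> \<in> C" and P_lim: "(\<lambda>n. P (\<rho> n)) \<longlonglongrightarrow> P \<eta>"
    using closed[of \<rho> \<eta>] \<rho>L L(1) lim by auto
  have "s - 1 / Suc n < P \<eta>" for n
  proof -
    have "\<rho> n \<le> \<eta>" using incseq_le[OF inc lim] by (simp add: le_fun_def)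
    then have "P (g n) \<le> P \<eta>"
      using mono[OF _ _ g_le[of n]] mono[OF _ \<eta>C] g(1) \<rho>L L(1) by (meson order_trans subsetD)
    with g(2)[of n] show ?thesis by linarith
  qed
  moreover have "(\<lambda>n. s - 1 / Suc n) \<longlonglongrightarrow> s - 0"
    using tendsto_diff[OF tendsto_const LIMSEQ_inverse_real_of_nat] by (simp add: inverse_eq_divide)
  ultimately have "s \<le> P \<eta>" by (intro LIMSEQ_le_const2[of _ s]) (auto intro: less_imp_le)
  have upper: "\<gamma> \<le> \<eta>" if "\<gamma> \<in> L" for \<gamma>
  proof (rule ccontr)
    assume "\<not> \<gamma> \<le> \<eta>"
    then have "\<eta> < \<gamma>" using total[OF _ \<eta>C, of \<gamma>] that L(1) by (auto simp: less_le)
    then have "P \<eta> < P \<gamma>" using strict[OF \<eta>C] that L(1) by blast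
    moreover have "P \<gamma> \<le> s" using that L by (auto simp: s_def intro: cSup_upper)
    ultimately show False using \<open>s \<le> P \<eta>\<close> by linarith
  qed
  show ?thesis by (rule that[OF \<eta>C upper \<rho>L lim])
qed

text \<open>The dual statement follows by reflecting the family in the origin.\<close>
lemma chain_Inf_limit:
  fixes C L :: "('a \<Rightarrow> real) set" and P :: "('a \<Rightarrow> real) \<Rightarrow> real"
  assumes total: "\<And>\<gamma> \<eta>. \<gamma> \<in> C \<Longrightarrow> \<eta> \<in> C \<Longrightarrow> \<gamma> \<le> \<eta> \<or> \<eta> \<le> \<gamma>"
    and strict: "\<And>\<gamma> \<eta>. \<gamma> \<in> C \<Longrightarrow> \<eta> \<in> C \<Longrightarrow> \<gamma> < \<eta> \<Longrightarrow> P \<gamma> < P \<eta>"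
    and closed: "\<And>\<rho> \<eta>. (\<And>n. \<rho> n \<in> C) \<Longrightarrow> (\<And>x. (\<lambda>n. \<rho> n x) \<longlonglongrightarrow> \<eta> x) \<Longrightarrow>
      \<eta> \<in> C \<and> (\<lambda>n. P (\<rho> n)) \<longlonglongrightarrow> P \<eta>"
    and L: "L \<subseteq> C" "L \<noteq> {}" "bdd_below (P ` L)" and bdd: "\<And>x. bdd_below ((\<lambda>\<gamma>. \<gamma> x) ` L)"
  obtains \<eta> \<rho> where "\<eta> \<in> C" "\<And>\<gamma>. \<gamma> \<in> L \<Longrightarrow> \<eta> \<le> \<gamma>" "\<And>n. \<rho> n \<in> L" "\<And>x. (\<lambda>n. \<rho> n x) \<longlonglongrightarrow> \<eta> x"
proof -
  have neg_le: "- \<gamma> \<le> - \<eta> \<longleftrightarrow> \<eta> \<le> \<gamma>" for \<gamma> \<eta> :: "'a \<Rightarrow> real"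
    by (simp add: le_fun_def)
  have neg_less: "- \<gamma> < - \<eta> \<longleftrightarrow> \<eta> < \<gamma>" for \<gamma> \<eta> :: "'a \<Rightarrow> real"
    by (simp add: less_le_not_le neg_le)
  have neg_neg: "- (- \<gamma>) = \<gamma>" for \<gamma> :: "'a \<Rightarrow> real"
    by (simp add: fun_eq_iff)
  obtain \<eta> \<rho> where \<eta>: "\<eta> \<in> uminus ` C" "\<And>\<gamma>. \<gamma> \<in> uminus ` L \<Longrightarrow> \<gamma> \<le> \<eta>"
    and \<rho>: "\<And>n. \<rho> n \<in> uminus ` L" and lim: "\<And>x. (\<lambda>n. \<rho> n x) \<longlonglongrightarrow> \<eta> x"
  proof (rule chain_Sup_limit[of "uminus ` C" "\<lambda>\<gamma>. - P (- \<gamma>)" "uminus ` L"])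
    show "\<gamma> \<le> \<eta> \<or> \<eta> \<le> \<gamma>" if "\<gamma> \<in> uminus ` C" "\<eta> \<in> uminus ` C" for \<gamma> \<eta>
      using that total by (metis imageE neg_le)
    show "- P (- \<gamma>) < - P (- \<eta>)" if "\<gamma> \<in> uminus ` C" "\<eta> \<in> uminus ` C" "\<gamma> < \<eta>" for \<gamma> \<eta>
      using that strict by (auto simp: neg_less neg_neg)
    show "\<eta> \<in> uminus ` C \<and> (\<lambda>n. - P (- \<rho> n)) \<longlonglongrightarrow> - P (- \<eta>)"
      if "\<And>n. \<rho> n \<in> uminus ` C" "\<And>x. (\<lambda>n. \<rho> n x) \<longlonglongrightarrow> \<eta> x" for \<rho> \<eta>
    proof -
      have "- \<rho> n \<in> C" for n using that(1)[of n] by (auto simp: neg_neg)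
      moreover have "(\<lambda>n. (- \<rho> n) x) \<longlonglongrightarrow> (- \<eta>) x" for x by (simp add: tendsto_minus that(2))
      ultimately have "- \<eta> \<in> C \<and> (\<lambda>n. P (- \<rho> n)) \<longlonglongrightarrow> P (- \<eta>)" by (rule closed)
      moreover have "\<eta> = - (- \<eta>)" by (simp add: neg_neg)
      ultimately show ?thesis by (auto intro: tendsto_minus)
    qed
    show "uminus ` L \<subseteq> uminus ` C" "uminus ` L \<noteq> {}" using L by auto
    show "bdd_above ((\<lambda>\<gamma>. - P (- \<gamma>)) ` uminus ` L)"
      using L(3) by (simp add: image_image neg_neg bdd_above_uminus[symmetric] image_comp[symmetric] o_def)
    show "bdd_above ((\<lambda>\<gamma>. \<gamma> x) ` uminus ` L)" for x
      using bdd[of x] by (simp add: image_image bdd_above_uminus[symmetric] image_comp[symmetric] o_def)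
  qed blast
  show ?thesis
  proof (rule that[of "- \<eta>" "\<lambda>n. - \<rho> n"])
    show "- \<eta> \<in> C" using \<eta>(1) by (auto simp: neg_neg)
    show "- \<eta> \<le> \<gamma>" if "\<gamma> \<in> L" for \<gamma>
    proof -
      have "- \<gamma> \<le> \<eta>" using \<eta>(2) that by blast
      then show ?thesis using neg_le[of \<eta> "- \<gamma>"] by (simp add: neg_neg)
    qed
    show "- \<rho> n \<in> L" for n using \<rho>[of n] by (auto simp: neg_neg)
    show "(\<lambda>n. (- \<rho> n) x) \<longlonglongrightarrow> (- \<eta>) x" for x by (simp add: tendsto_minus lim)
  qed
qed

section \<open>Admissible characteristics\<close>

locale characteristics =
  fixes f :: "real \<Rightarrow> real" and u :: "real \<Rightarrow> real \<Rightarrow> real" and G M T :: real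
  assumes deriv_f_continuous: "continuous_on UNIV (deriv f)"
    and u_continuous: "continuous_on ({0..} \<times> UNIV) (\<lambda>(t, x). u t x)"
    and speed_bounded: "\<And>t x. t \<ge> 0 \<Longrightarrow> \<bar>deriv f (u t x)\<bar> \<le> M"
    and T_pos: "T > 0" and u_vanishes: "\<And>t x. t \<ge> T \<Longrightarrow> u t x = 0"
begin

abbreviation speed :: "real \<Rightarrow> real \<Rightarrow> real" where
  "speed t x \<equiv> deriv f (u t x)"

definition classical_char :: "(real \<Rightarrow> real) \<Rightarrow> bool" where
  "classical_char \<gamma> \<longleftrightarrow> continuous_on {0..} \<gamma> \<and> (\<forall>t>0. (\<gamma> has_real_derivative speed t (\<gamma> t)) (at t))"

text \<open>Admissible curves are frozen for negative times, so that the pointwise order of functions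
  only sees their behaviour on \<open>[0, \<infinity>)\<close>.\<close>
definition admissible :: "(real \<Rightarrow> real) \<Rightarrow> bool" where
  "admissible \<gamma> \<longleftrightarrow> classical_char \<gamma> \<and> lipschitz_on G {0..} (\<lambda>t. u t (\<gamma> t)) \<and> (\<forall>t<0. \<gamma> t = \<gamma> 0)"

lemma M_nonneg: "M \<ge> 0"
  using speed_bounded[of 0 0] by auto

lemma continuous_on_u_along:
  assumes "continuous_on S \<gamma>" "S \<subseteq> {0..}"
  shows "continuous_on S (\<lambda>t. u t (\<gamma> t))"
  using continuous_on_compose2[OF u_continuous continuous_on_Pair[OF continuous_on_id assms(1)]] assms(2)
  by auto

lemma continuous_on_speed_along:
  assumes "continuous_on S \<gamma>" "S \<subseteq> {0..}"
  shows "continuous_on S (\<lambda>t. speed t (\<gamma> t))"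
  using continuous_on_compose2[OF deriv_f_continuous continuous_on_u_along[OF assms]] by simp

lemma tendsto_u_at:
  assumes "t \<ge> 0" "X \<longlonglongrightarrow> x"
  shows "(\<lambda>n. u t (X n)) \<longlonglongrightarrow> u t x"
proof -
  have "(\<lambda>n. (t, X n)) \<longlonglongrightarrow> (t, x)" using assms(2) by (intro tendsto_intros)
  from continuous_on_tendsto_compose[OF u_continuous this] assms(1) show ?thesis by simp
qed

lemma tendsto_speed_at:
  assumes "t \<ge> 0" "X \<longlonglongrightarrow> x"
  shows "(\<lambda>n. speed t (X n)) \<longlonglongrightarrow> speed t x"
proof -
  have "isCont (deriv f) (u t x)"
    using deriv_f_continuous by (simp add: continuous_on_eq_continuous_at)
  then show ?thesis by (rule isCont_tendsto_compose[OF _ tendsto_u_at[OF assms]])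
qed

lemma lipschitz_integral_speed:
  assumes "continuous_on {0..} \<gamma>"
  shows "lipschitz_on M {0..} (\<lambda>t. integral {0..t} (\<lambda>s. speed s (\<gamma> s)))"
proof -
  let ?F = "\<lambda>t. integral {0..t} (\<lambda>s. speed s (\<gamma> s))"
  have le: "\<bar>?F y - ?F x\<bar> \<le> M * (y - x)" if "0 \<le> x" "x \<le> y" for x y
  proof -
    have cy: "continuous_on {0..y} (\<lambda>s. speed s (\<gamma> s))"
      using assms by (intro continuous_on_speed_along) (auto intro: continuous_on_subset)
    have "?F x + integral {x..y} (\<lambda>s. speed s (\<gamma> s)) = ?F y"
      using that cy by (intro Henstock_Kurzweil_Integration.integral_combine integrable_continuous_interval)
    moreover have "norm (integral {x..y} (\<lambda>s. speed s (\<gamma> s))) \<le> M * (y - x)"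
      using that cy speed_bounded
      by (intro integral_bound) (auto intro: continuous_on_subset)
    ultimately show ?thesis by (simp add: algebra_simps)
  qed
  show ?thesis
  proof (rule lipschitz_onI)
    fix x y :: real assume "x \<in> {0..}" "y \<in> {0..}"
    then show "dist (?F x) (?F y) \<le> M * dist x y"
      using le[of x y] le[of y x] by (cases "x \<le> y") (auto simp: dist_real_def abs_minus_commute)
  qed (rule M_nonneg)
qed

lemma has_real_derivative_integral_speed:
  assumes "continuous_on {0..} \<gamma>" "t > 0"
  shows "((\<lambda>t. integral {0..t} (\<lambda>s. speed s (\<gamma> s))) has_real_derivative speed t (\<gamma> t)) (at t)"
proof -
  have "continuous_on {0..t+1} (\<lambda>s. speed s (\<gamma> s))"
    using assms by (intro continuous_on_speed_along) (auto intro: continuous_on_subset)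
  from integral_has_real_derivative[OF this, of t] assms(2)
  have "((\<lambda>t. integral {0..t} (\<lambda>s. speed s (\<gamma> s))) has_real_derivative speed t (\<gamma> t))
      (at t within {0..t+1})" by simp
  moreover have "at t within {0..t+1} = at t"
    by (rule at_within_interior) (use assms(2) in auto)
  ultimately show ?thesis by simp
qed

lemma classical_char_iff_integral:
  "classical_char \<gamma> \<longleftrightarrow>
     continuous_on {0..} \<gamma> \<and> (\<forall>t\<ge>0. \<gamma> t = \<gamma> 0 + integral {0..t} (\<lambda>s. speed s (\<gamma> s)))"
proof (intro iffI conjI allI impI)
  assume "classical_char \<gamma>"
  then show c: "continuous_on {0..} \<gamma>" by (simp add: classical_char_def)
  have d: "\<And>t. t > 0 \<Longrightarrow> (\<gamma> has_real_derivative speed t (\<gamma> t)) (at t)"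
    using \<open>classical_char \<gamma>\<close> by (simp add: classical_char_def)
  fix t :: real assume "t \<ge> 0"
  have "((\<lambda>s. speed s (\<gamma> s)) has_integral \<gamma> t - \<gamma> 0) {0..t}"
    using \<open>t \<ge> 0\<close> c d
    by (intro fundamental_theorem_of_calculus_interior)
       (auto intro: continuous_on_subset simp: has_real_derivative_iff_has_vector_derivative[symmetric])
  then show "\<gamma> t = \<gamma> 0 + integral {0..t} (\<lambda>s. speed s (\<gamma> s))"
    by (simp add: integral_unique)
next
  assume H: "continuous_on {0..} \<gamma> \<and> (\<forall>t\<ge>0. \<gamma> t = \<gamma> 0 + integral {0..t} (\<lambda>s. speed s (\<gamma> s)))"
  then have c: "continuous_on {0..} \<gamma>"
    and eq: "\<And>t. t \<ge> 0 \<Longrightarrow> \<gamma> t = \<gamma> 0 + integral {0..t} (\<lambda>s. speed s (\<gamma> s))" by blast+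
  have "(\<gamma> has_real_derivative speed t (\<gamma> t)) (at t)" if "t > 0" for t
  proof -
    have "\<forall>\<^sub>F s in nhds t. s \<in> {0<..}" using that by (intro eventually_nhds_in_open) auto
    then have ev: "\<forall>\<^sub>F s in nhds t. \<gamma> s = \<gamma> 0 + integral {0..s} (\<lambda>s. speed s (\<gamma> s))"
      by eventually_elim (rule eq, simp)
    have "((\<lambda>s. \<gamma> 0 + integral {0..s} (\<lambda>s. speed s (\<gamma> s))) has_real_derivative speed t (\<gamma> t)) (at t)"
      using has_real_derivative_integral_speed[OF c that] by (auto intro!: derivative_eq_intros)
    then show ?thesis using DERIV_cong_ev[OF refl ev refl] by simp
  qed
  with c show "classical_char \<gamma>" by (simp add: classical_char_def)
qed

lemma classical_char_lipschitz:
  assumes "classical_char \<gamma>"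
  shows "lipschitz_on M {0..} \<gamma>"
proof -
  let ?F = "\<lambda>t. integral {0..t} (\<lambda>s. speed s (\<gamma> s))"
  have c: "continuous_on {0..} \<gamma>" and eq: "\<And>t. t \<ge> 0 \<Longrightarrow> \<gamma> t = \<gamma> 0 + ?F t"
    using assms unfolding classical_char_iff_integral by blast+
  show ?thesis
  proof (rule lipschitz_onI)
    fix x y :: real assume "x \<in> {0..}" "y \<in> {0..}"
    then have "\<gamma> x - \<gamma> y = ?F x - ?F y" using eq[of x] eq[of y] by simp
    then show "dist (\<gamma> x) (\<gamma> y) \<le> M * dist x y"
      using lipschitz_onD[OF lipschitz_integral_speed[OF c] \<open>x \<in> {0..}\<close> \<open>y \<in> {0..}\<close>]
      by (simp add: dist_real_def)
  qed (rule M_nonneg)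
qed

lemma abs_cont_on_imp_continuous_on:
  assumes "abs_cont_on \<gamma> {0..}"
  shows "continuous_on {0..} \<gamma>"
  unfolding continuous_on_def
proof
  fix x :: real assume "x \<in> {0..}"
  then have "continuous_on {0..x+1} \<gamma>"
    using assms by (intro abs_cont_on_interval_imp_continuous_on) (auto simp: abs_cont_on_def)
  then have "(\<gamma> \<longlongrightarrow> \<gamma> x) (at x within {0..x+1})"
    using \<open>x \<in> {0..}\<close> by (auto simp: continuous_on_def)
  moreover have "at x within {0..} = at x within {0..x+1}"
    by (rule at_within_nhd[of _ "{..<x+1}"]) auto
  ultimately show "(\<gamma> \<longlongrightarrow> \<gamma> x) (at x within {0..})" by simp
qed

text \<open>A characteristic in the sense of Caratheodory is classical: minus the integral of its speed
  it is absolutely continuous with derivative zero almost everywhere, hence constant.\<close>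
lemma char_curve_imp_classical_char:
  assumes "char_curve f u \<gamma>"
  shows "classical_char \<gamma>"
proof -
  have ac: "abs_cont_on \<gamma> {0..}"
    and ae: "AE t in lebesgue. 0 \<le> t \<longrightarrow> (\<gamma> has_real_derivative speed t (\<gamma> t)) (at t)"
    using assms by (auto simp: char_curve_def)
  have c: "continuous_on {0..} \<gamma>" by (rule abs_cont_on_imp_continuous_on[OF ac])
  from ae obtain N where N: "N \<in> null_sets lebesgue"
    and der: "\<And>t. t \<notin> N \<Longrightarrow> 0 \<le> t \<Longrightarrow> (\<gamma> has_real_derivative speed t (\<gamma> t)) (at t)"
    by (auto elim!: AE_E3)
  let ?F = "\<lambda>t. integral {0..t} (\<lambda>s. speed s (\<gamma> s))"
  have const: "\<gamma> b - ?F b = \<gamma> 0 - ?F 0" if "b \<ge> 0" for b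
  proof (rule abs_cont_derivative_zero_ae_imp_const[OF _ that])
    have "abs_cont_on_interval ?F 0 b"
      by (rule lipschitz_imp_abs_cont_on_interval[OF lipschitz_on_subset[OF lipschitz_integral_speed[OF c]]])
        auto
    with ac show "abs_cont_on_interval (\<lambda>s. \<gamma> s - ?F s) 0 b"
      by (intro abs_cont_on_interval_diff) (auto simp: abs_cont_on_def)
    show "negligible (insert 0 N)" using N by (simp add: negligible_iff_null_sets)
    fix x assume "x \<in> {0..b}" "x \<notin> insert 0 N"
    then show "((\<lambda>s. \<gamma> s - ?F s) has_real_derivative 0) (at x)"
      using DERIV_diff[OF der has_real_derivative_integral_speed[OF c]] by fastforce
  qed
  have "\<gamma> b = \<gamma> 0 + ?F b" if "b \<ge> 0" for b
    using const[OF that] by simp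
  with c show ?thesis unfolding classical_char_iff_integral by blast
qed

lemma classical_char_imp_char_curve:
  assumes "classical_char \<gamma>"
  shows "char_curve f u \<gamma>"
  unfolding char_curve_def
proof
  show "abs_cont_on \<gamma> {0..}"
    unfolding abs_cont_on_def
    using lipschitz_on_subset[OF classical_char_lipschitz[OF assms]]
    by (blast intro: lipschitz_imp_abs_cont_on_interval)
  have "{t \<in> space lebesgue. \<not> (0 \<le> t \<longrightarrow> (\<gamma> has_real_derivative speed t (\<gamma> t)) (at t))} \<subseteq> {0}"
    using assms by (force simp: classical_char_def)
  then show "AE t in lebesgue. 0 \<le> t \<longrightarrow> (\<gamma> has_real_derivative speed t (\<gamma> t)) (at t)"
    by (intro AE_I'[of "{0}"]) (auto simp: negligible_iff_null_sets[symmetric])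
qed

lemma admissible_lipschitz: "admissible \<gamma> \<Longrightarrow> lipschitz_on M {0..} \<gamma>"
  by (simp add: admissible_def classical_char_lipschitz)

lemma admissible_continuous_on: "admissible \<gamma> \<Longrightarrow> continuous_on {0..} \<gamma>"
  by (simp add: admissible_def classical_char_def)

lemma admissible_max_0: "admissible \<gamma> \<Longrightarrow> \<gamma> (max 0 t) = \<gamma> t"
  by (simp add: admissible_def max_def)

lemma admissible_dist_le:
  assumes "admissible \<gamma>" "s \<ge> 0" "t \<ge> 0"
  shows "\<bar>\<gamma> t - \<gamma> s\<bar> \<le> M * \<bar>t - s\<bar>"
  using lipschitz_onD[OF admissible_lipschitz[OF assms(1)], of t s] assms(2,3) by (simp add: dist_real_def)

lemma admissible_dist_le_abs:
  assumes "admissible \<gamma>" "t0 \<ge> 0"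
  shows "\<bar>\<gamma> t - \<gamma> t0\<bar> \<le> M * (\<bar>t\<bar> + t0)"
proof -
  have "\<bar>\<gamma> (max 0 t) - \<gamma> t0\<bar> \<le> M * \<bar>max 0 t - t0\<bar>"
    using admissible_dist_le[OF assms(1,2)] by simp
  also have "\<dots> \<le> M * (\<bar>t\<bar> + t0)"
    using M_nonneg assms(2) by (intro mult_left_mono) auto
  finally show ?thesis by (simp add: admissible_max_0[OF assms(1)])
qed

lemma admissible_switch:
  fixes d :: "real \<Rightarrow> real"
  assumes \<gamma>1: "admissible \<gamma>1" and \<gamma>2: "admissible \<gamma>2" and d: "continuous_on {0..} d"
    and agree: "\<And>t. t \<ge> 0 \<Longrightarrow> d t = 0 \<Longrightarrow> \<gamma>1 t = \<gamma>2 t" and frozen: "\<And>t. t < 0 \<Longrightarrow> d t = d 0"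
  shows "admissible (\<lambda>t. if 0 \<le> d t then \<gamma>1 t else \<gamma>2 t)"
proof -
  let ?\<gamma> = "\<lambda>t. if 0 \<le> d t then \<gamma>1 t else \<gamma>2 t"
  have "lipschitz_on M {0..} ?\<gamma>"
    by (rule lipschitz_on_switch[OF admissible_lipschitz[OF \<gamma>1] admissible_lipschitz[OF \<gamma>2]
          is_interval_atLeast d]) (simp add: agree)
  then have c: "continuous_on {0..} ?\<gamma>" by (rule lipschitz_on_continuous_on)
  have "(?\<gamma> has_real_derivative speed t (?\<gamma> t)) (at t)" if "t > 0" for t
  proof -
    have "isCont d t" using d that by (intro continuous_on_interior) auto
    with \<gamma>1 \<gamma>2 that agree[of t]
    have "(?\<gamma> has_real_derivative (if 0 \<le> d t then speed t (\<gamma>1 t) else speed t (\<gamma>2 t))) (at t)"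
      by (intro has_real_derivative_switch) (auto simp: admissible_def classical_char_def)
    then show ?thesis by (simp split: if_splits)
  qed
  with c have "classical_char ?\<gamma>" by (simp add: classical_char_def)
  moreover have "lipschitz_on G {0..} (\<lambda>t. u t (?\<gamma> t))"
  proof -
    have "lipschitz_on G {0..} (\<lambda>t. if 0 \<le> d t then u t (\<gamma>1 t) else u t (\<gamma>2 t))"
      using \<gamma>1 \<gamma>2 by (intro lipschitz_on_switch[OF _ _ is_interval_atLeast d]) (auto simp: admissible_def agree)
    then show ?thesis by (simp add: if_distrib[of "u _"])
  qed
  moreover have "\<forall>t<0. ?\<gamma> t = ?\<gamma> 0"
    using \<gamma>1 \<gamma>2 frozen by (simp add: admissible_def)
  ultimately show ?thesis by (simp add: admissible_def)
qed

lemma admissible_max: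
  assumes "admissible \<gamma>1" "admissible \<gamma>2"
  shows "admissible (\<lambda>t. max (\<gamma>1 t) (\<gamma>2 t))"
proof -
  have c: "continuous_on {0..} (\<lambda>t. \<gamma>1 t - \<gamma>2 t)"
    using assms by (intro continuous_intros admissible_continuous_on)
  have "admissible (\<lambda>t. if 0 \<le> \<gamma>1 t - \<gamma>2 t then \<gamma>1 t else \<gamma>2 t)" (is "admissible ?\<gamma>")
    by (rule admissible_switch[OF assms c]) (use assms in \<open>auto simp: admissible_def\<close>)
  moreover have "?\<gamma> = (\<lambda>t. max (\<gamma>1 t) (\<gamma>2 t))" by (auto simp: fun_eq_iff)
  ultimately show ?thesis by simp
qed

lemma admissible_min:
  assumes "admissible \<gamma>1" "admissible \<gamma>2"
  shows "admissible (\<lambda>t. min (\<gamma>1 t) (\<gamma>2 t))"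
proof -
  have c: "continuous_on {0..} (\<lambda>t. \<gamma>2 t - \<gamma>1 t)"
    using assms by (intro continuous_intros admissible_continuous_on)
  have "admissible (\<lambda>t. if 0 \<le> \<gamma>2 t - \<gamma>1 t then \<gamma>1 t else \<gamma>2 t)"
    by (rule admissible_switch[OF assms c]) (use assms in \<open>auto simp: admissible_def\<close>)
  then show ?thesis by (simp add: min_def)
qed

lemma admissible_limit:
  assumes adm: "\<And>n. admissible (\<gamma>s n)" and lim: "\<And>t. (\<lambda>n. \<gamma>s n t) \<longlonglongrightarrow> \<eta> t"
  shows "admissible \<eta>"
proof -
  have c: "continuous_on {0..} \<eta>"
    using admissible_lipschitz[OF adm] lim
    by (intro lipschitz_on_continuous_on[OF lipschitz_on_tendsto])
  have "\<eta> t = \<eta> 0 + integral {0..t} (\<lambda>s. speed s (\<eta> s))" if "t \<ge> 0" for t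
  proof -
    have c_n: "continuous_on {0..t} (\<lambda>s. speed s (\<gamma>s n s))" for n
      using continuous_on_subset[OF admissible_continuous_on[OF adm[of n]], of "{0..t}"]
      by (intro continuous_on_speed_along) auto
    have "(\<lambda>n. integral {0..t} (\<lambda>s. speed s (\<gamma>s n s))) \<longlonglongrightarrow> integral {0..t} (\<lambda>s. speed s (\<eta> s))"
      using c_n speed_bounded lim
      by (intro dominated_convergence(2)[where h = "\<lambda>_. M"] integrable_continuous_interval tendsto_speed_at)
        auto
    then have "(\<lambda>n. \<gamma>s n 0 + integral {0..t} (\<lambda>s. speed s (\<gamma>s n s)))
        \<longlonglongrightarrow> \<eta> 0 + integral {0..t} (\<lambda>s. speed s (\<eta> s))"
      by (intro tendsto_add lim)
    moreover have "\<gamma>s n 0 + integral {0..t} (\<lambda>s. speed s (\<gamma>s n s)) = \<gamma>s n t" for n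
      using adm[of n] that unfolding admissible_def classical_char_iff_integral by metis
    ultimately have "(\<lambda>n. \<gamma>s n t) \<longlonglongrightarrow> \<eta> 0 + integral {0..t} (\<lambda>s. speed s (\<eta> s))" by simp
    then show ?thesis by (rule LIMSEQ_unique[OF lim[of t]])
  qed
  with c have "classical_char \<eta>" unfolding classical_char_iff_integral by blast
  moreover have "lipschitz_on G {0..} (\<lambda>t. u t (\<eta> t))"
  proof (rule lipschitz_on_tendsto)
    show "lipschitz_on G {0..} (\<lambda>t. u t (\<gamma>s n t))" for n
      using adm[of n] by (simp add: admissible_def)
    show "(\<lambda>n. u t (\<gamma>s n t)) \<longlonglongrightarrow> u t (\<eta> t)" if "t \<in> {0..}" for t
      using tendsto_u_at[OF _ lim] that by simp
  qed
  moreover have "\<eta> t = \<eta> 0" if "t < 0" for t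
  proof -
    have "\<gamma>s n t = \<gamma>s n 0" for n using adm[of n] that by (simp add: admissible_def)
    then have "(\<lambda>n. \<gamma>s n t) \<longlonglongrightarrow> \<eta> 0" using lim[of 0] by simp
    then show ?thesis by (rule LIMSEQ_unique[OF lim[of t]])
  qed
  ultimately show ?thesis by (simp add: admissible_def)
qed

lemma admissible_freeze:
  assumes "char_curve f u \<gamma>" "lipschitz_on G {0..} (\<lambda>t. u t (\<gamma> t))"
  shows "admissible (\<lambda>t. \<gamma> (max 0 t))"
proof -
  have \<gamma>: "classical_char \<gamma>" by (rule char_curve_imp_classical_char[OF assms(1)])
  have "continuous_on {0..} (\<lambda>t. \<gamma> (max 0 t))"
    using \<gamma> by (subst continuous_on_cong[OF refl, where g = \<gamma>]) (auto simp: classical_char_def)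
  moreover have "((\<lambda>t. \<gamma> (max 0 t)) has_real_derivative speed t (\<gamma> (max 0 t))) (at t)" if "t > 0" for t
  proof -
    have "\<forall>\<^sub>F s in nhds t. s \<in> {0<..}" using that by (intro eventually_nhds_in_open) auto
    then have ev: "\<forall>\<^sub>F s in nhds t. \<gamma> (max 0 s) = \<gamma> s" by eventually_elim simp
    show ?thesis using DERIV_cong_ev[OF refl ev refl] \<gamma> that by (simp add: classical_char_def)
  qed
  ultimately have "classical_char (\<lambda>t. \<gamma> (max 0 t))" by (simp add: classical_char_def)
  moreover have "lipschitz_on G {0..} (\<lambda>t. u t (\<gamma> (max 0 t)))"
    using assms(2) unfolding lipschitz_on_def by simp
  ultimately show ?thesis by (simp add: admissible_def)
qed

definition area :: "(real \<Rightarrow> real) \<Rightarrow> real" where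
  "area \<gamma> = integral {0..T} \<gamma>"

lemma admissible_integrable: "admissible \<gamma> \<Longrightarrow> \<gamma> integrable_on {0..T}"
  by (intro integrable_continuous_interval continuous_on_subset[OF admissible_continuous_on]) auto

lemma area_mono:
  assumes "admissible \<gamma>" "admissible \<eta>" "\<gamma> \<le> \<eta>"
  shows "area \<gamma> \<le> area \<eta>"
  unfolding area_def using assms
  by (intro Henstock_Kurzweil_Integration.integral_le admissible_integrable) (auto simp: le_fun_def)

text \<open>For \<open>t \<ge> T\<close> the speed no longer depends on the position, so two admissible curves that
  agree on \<open>[0, T]\<close> agree everywhere.\<close>
lemma area_eq_imp_eq:
  assumes \<gamma>: "admissible \<gamma>" and \<eta>: "admissible \<eta>" and le: "\<gamma> \<le> \<eta>" and eq: "area \<gamma> = area \<eta>"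
  shows "\<gamma> = \<eta>"
proof -
  let ?d = "\<lambda>t. \<eta> t - \<gamma> t"
  have cd: "continuous_on {0..} ?d"
    using \<gamma> \<eta> by (intro continuous_intros admissible_continuous_on)
  have "(?d has_integral 0) (cbox 0 T)"
    using has_integral_diff[OF integrable_integral[OF admissible_integrable[OF \<eta>]]
        integrable_integral[OF admissible_integrable[OF \<gamma>]]] eq
    by (simp add: area_def)
  then have on_0T: "?d t = 0" if "t \<in> {0..T}" for t
    using cd le T_pos that
    by (intro has_integral_0_cbox_imp_0[of 0 T ?d]) (auto intro: continuous_on_subset simp: le_fun_def)
  have "?d t = ?d T" if "t > T" for t
  proof (rule DERIV_isconst_end[OF that])
    show "continuous_on {T..t} ?d" using cd T_pos by (auto intro: continuous_on_subset)
    fix s assume "T < s" "s < t"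
    then have "((\<lambda>t. \<eta> t - \<gamma> t) has_real_derivative speed s (\<eta> s) - speed s (\<gamma> s)) (at s)"
      using \<gamma> \<eta> T_pos by (intro DERIV_diff) (auto simp: admissible_def classical_char_def)
    with \<open>T < s\<close> show "(?d has_real_derivative 0) (at s)" by (simp add: u_vanishes)
  qed
  then have "?d t = 0" if "t \<ge> 0" for t
    using on_0T[of t] on_0T[of T] T_pos that by (cases "t \<le> T") auto
  moreover have "?d t = ?d 0" if "t < 0" for t
    using \<gamma> \<eta> that by (simp add: admissible_def)
  ultimately have "?d t = 0" for t
    by (metis linorder_not_le order_refl)
  then show ?thesis by (simp add: fun_eq_iff)
qed

lemma area_bounds:
  assumes "admissible \<gamma>"
  shows "T * (\<gamma> 0 - M * T) \<le> area \<gamma>" "area \<gamma> \<le> T * (\<gamma> 0 + M * T)"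
proof -
  have "\<gamma> 0 - M * T \<le> \<gamma> t" "\<gamma> t \<le> \<gamma> 0 + M * T" if "t \<in> {0..T}" for t
    using admissible_dist_le[OF assms, of 0 t] mult_left_mono[of t T M] M_nonneg that by auto
  note bounds = this
  have "integral {0..T} (\<lambda>t. \<gamma> 0 - M * T) \<le> integral {0..T} \<gamma>"
    by (rule Henstock_Kurzweil_Integration.integral_le)
      (use bounds admissible_integrable[OF assms] in auto)
  moreover have "integral {0..T} \<gamma> \<le> integral {0..T} (\<lambda>t. \<gamma> 0 + M * T)"
    by (rule Henstock_Kurzweil_Integration.integral_le)
      (use bounds admissible_integrable[OF assms] in auto)
  ultimately show "T * (\<gamma> 0 - M * T) \<le> area \<gamma>" "area \<gamma> \<le> T * (\<gamma> 0 + M * T)"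
    using T_pos by (simp_all add: area_def)
qed

lemma area_tendsto:
  assumes adm: "\<And>n. admissible (\<rho> n)" "admissible \<eta>" and lim: "\<And>t. (\<lambda>n. \<rho> n t) \<longlonglongrightarrow> \<eta> t"
  shows "(\<lambda>n. area (\<rho> n)) \<longlonglongrightarrow> area \<eta>"
proof -
  obtain B where B: "\<forall>n. \<bar>\<rho> n 0\<bar> \<le> B"
    using convergent_imp_Bseq[OF convergentI[OF lim[of 0]]] unfolding Bseq_def by auto
  have "\<bar>\<rho> n t\<bar> \<le> B + M * T" if "t \<in> {0..T}" for n t
    using admissible_dist_le[OF adm(1), of 0 t n] B[rule_format, of n] mult_left_mono[of t T M] M_nonneg that
    by auto
  then show ?thesis
    unfolding area_def using adm lim
    by (intro dominated_convergence(2)[where h = "\<lambda>_. B + M * T"]) (auto simp: admissible_integrable)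
qed

lemma dense_admissible:
  assumes "D \<subseteq> {0..} \<times> UNIV" "{0..} \<times> UNIV \<subseteq> closure D"
    and "\<forall>(t, x) \<in> D. \<exists>\<gamma>. char_curve f u \<gamma> \<and> \<gamma> t = x \<and> lipschitz_on G {0..} (\<lambda>s. u s (\<gamma> s))"
  shows "{0..} \<times> UNIV \<subseteq> closure {(t, \<gamma> t) | t \<gamma>. 0 \<le> t \<and> admissible \<gamma>}"
proof -
  have "D \<subseteq> {(t, \<gamma> t) | t \<gamma>. 0 \<le> t \<and> admissible \<gamma>}"
  proof safe
    fix t x assume "(t, x) \<in> D"
    then obtain \<gamma> where "char_curve f u \<gamma>" "\<gamma> t = x" "lipschitz_on G {0..} (\<lambda>s. u s (\<gamma> s))"
      using bspec[OF assms(3)] by auto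
    moreover have "t \<ge> 0" using assms(1) \<open>(t, x) \<in> D\<close> by auto
    ultimately show "\<exists>s \<eta>. (t, x) = (s, \<eta> s) \<and> 0 \<le> s \<and> admissible \<eta>"
      by (intro exI[of _ t] exI[of _ "\<lambda>s. \<gamma> (max 0 s)"]) (simp add: admissible_freeze)
  qed
  then show ?thesis using assms(2) closure_mono by blast
qed

end

section \<open>A maximal chain of admissible curves\<close>

text \<open>The members of the maximal chain \<open>Ch\<close> become the trajectories \<open>t \<mapsto> \<chi>(t, y)\<close>.\<close>
locale characteristics_maxchain = characteristics +
  fixes Ch :: "(real \<Rightarrow> real) set"
  assumes maxchain: "pred_on.maxchain {\<gamma>. admissible \<gamma>} (<) Ch"
    and dense: "{0..} \<times> UNIV \<subseteq> closure {(t, \<gamma> t) | t \<gamma>. 0 \<le> t \<and> admissible \<gamma>}"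
begin

lemma Ch_admissible: "\<gamma> \<in> Ch \<Longrightarrow> admissible \<gamma>"
  using maxchain by (auto simp: pred_on.maxchain_def pred_on.chain_def)

lemma Ch_total: "\<gamma> \<in> Ch \<Longrightarrow> \<eta> \<in> Ch \<Longrightarrow> \<gamma> \<le> \<eta> \<or> \<eta> \<le> \<gamma>"
  using maxchain by (auto simp: pred_on.maxchain_def pred_on.chain_def le_less)

lemma Ch_maximal:
  assumes "admissible \<xi>" "\<And>\<gamma>. \<gamma> \<in> Ch \<Longrightarrow> \<gamma> \<le> \<xi> \<or> \<xi> \<le> \<gamma>"
  shows "\<xi> \<in> Ch"
proof (rule ccontr)
  assume "\<xi> \<notin> Ch"
  have "pred_on.chain {\<gamma>. admissible \<gamma>} (<) (insert \<xi> Ch)"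
    using maxchain assms by (auto simp: pred_on.maxchain_def pred_on.chain_def le_less)
  with \<open>\<xi> \<notin> Ch\<close> maxchain show False by (auto simp: pred_on.maxchain_def)
qed

lemma Ch_tendsto:
  assumes \<rho>: "\<And>n. \<rho> n \<in> Ch" and lim: "\<And>t. (\<lambda>n. \<rho> n t) \<longlonglongrightarrow> \<eta> t"
  shows "\<eta> \<in> Ch"
proof (rule Ch_maximal)
  show adm: "admissible \<eta>" using Ch_admissible[OF \<rho>] lim by (rule admissible_limit)
  fix \<xi> assume \<xi>: "\<xi> \<in> Ch"
  show "\<xi> \<le> \<eta> \<or> \<eta> \<le> \<xi>"
  proof (rule disjCI)
    assume "\<not> \<eta> \<le> \<xi>"
    then obtain t where "\<xi> t < \<eta> t" by (auto simp: le_fun_def not_le)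
    then have "\<forall>\<^sub>F n in sequentially. \<xi> t < \<rho> n t" by (rule order_tendstoD(1)[OF lim])
    then have "\<forall>\<^sub>F n in sequentially. \<xi> \<le> \<rho> n"
      by eventually_elim (metis Ch_total[OF \<xi> \<rho>] le_funD not_le)
    then have "\<forall>\<^sub>F n in sequentially. \<xi> s \<le> \<rho> n s" for s
      by eventually_elim (simp add: le_fun_def)
    then show "\<xi> \<le> \<eta>"
      unfolding le_fun_def by (auto intro: tendsto_lowerbound[OF lim])
  qed
qed

lemma area_strict_mono:
  assumes "\<gamma> \<in> Ch" "\<eta> \<in> Ch" "\<gamma> < \<eta>"
  shows "area \<gamma> < area \<eta>"
  using area_mono[of \<gamma> \<eta>] area_eq_imp_eq[of \<gamma> \<eta>] Ch_admissible assms by (force simp: less_le)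

lemma Ch_tendsto_area:
  assumes "\<And>n. \<rho> n \<in> Ch" "\<And>t. (\<lambda>n. \<rho> n t) \<longlonglongrightarrow> \<eta> t"
  shows "\<eta> \<in> Ch \<and> (\<lambda>n. area (\<rho> n)) \<longlonglongrightarrow> area \<eta>"
  using Ch_tendsto[OF assms] area_tendsto[OF Ch_admissible[OF assms(1)] _ assms(2)] Ch_admissible
  by blast

lemma Ch_Sup:
  assumes L: "L \<subseteq> Ch" "L \<noteq> {}" and t0: "t0 \<ge> 0" and bound: "\<And>\<gamma>. \<gamma> \<in> L \<Longrightarrow> \<gamma> t0 \<le> c"
  obtains \<eta> \<rho> where "\<eta> \<in> Ch" "\<And>\<gamma>. \<gamma> \<in> L \<Longrightarrow> \<gamma> \<le> \<eta>" "\<And>n. \<rho> n \<in> L"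
    "\<And>t. (\<lambda>n. \<rho> n t) \<longlonglongrightarrow> \<eta> t"
proof (rule chain_Sup_limit[OF Ch_total area_strict_mono Ch_tendsto_area L])
  have "\<gamma> t \<le> c + M * (\<bar>t\<bar> + t0)" if "\<gamma> \<in> L" for \<gamma> t
    using admissible_dist_le_abs[OF Ch_admissible t0, of \<gamma> t] bound[OF that] that L(1) by auto
  then show "bdd_above ((\<lambda>\<gamma>. \<gamma> t) ` L)" for t
    by (intro bdd_aboveI2[where M = "c + M * (\<bar>t\<bar> + t0)"])
  have "area \<gamma> \<le> T * (c + M * t0 + M * T)" if "\<gamma> \<in> L" for \<gamma>
  proof -
    have "\<gamma> 0 \<le> c + M * t0"
      using admissible_dist_le_abs[OF Ch_admissible t0, of \<gamma> 0] bound[OF that] that L(1) by auto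
    then have "T * (\<gamma> 0 + M * T) \<le> T * (c + M * t0 + M * T)"
      using T_pos by (intro mult_left_mono) auto
    with area_bounds(2)[OF Ch_admissible, of \<gamma>] that L(1) show ?thesis by auto
  qed
  then show "bdd_above (area ` L)" by (rule bdd_aboveI2)
qed (auto simp: that)

lemma Ch_Inf:
  assumes L: "L \<subseteq> Ch" "L \<noteq> {}" and t0: "t0 \<ge> 0" and bound: "\<And>\<gamma>. \<gamma> \<in> L \<Longrightarrow> c \<le> \<gamma> t0"
  obtains \<eta> \<rho> where "\<eta> \<in> Ch" "\<And>\<gamma>. \<gamma> \<in> L \<Longrightarrow> \<eta> \<le> \<gamma>" "\<And>n. \<rho> n \<in> L"
    "\<And>t. (\<lambda>n. \<rho> n t) \<longlonglongrightarrow> \<eta> t"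
proof (rule chain_Inf_limit[OF Ch_total area_strict_mono Ch_tendsto_area L])
  have "c - M * (\<bar>t\<bar> + t0) \<le> \<gamma> t" if "\<gamma> \<in> L" for \<gamma> t
    using admissible_dist_le_abs[OF Ch_admissible t0, of \<gamma> t] bound[OF that] that L(1) by auto
  then show "bdd_below ((\<lambda>\<gamma>. \<gamma> t) ` L)" for t
    by (intro bdd_belowI2[where m = "c - M * (\<bar>t\<bar> + t0)"])
  have "T * (c - M * t0 - M * T) \<le> area \<gamma>" if "\<gamma> \<in> L" for \<gamma>
  proof -
    have "c - M * t0 \<le> \<gamma> 0"
      using admissible_dist_le_abs[OF Ch_admissible t0, of \<gamma> 0] bound[OF that] that L(1) by auto
    then have "T * (c - M * t0 - M * T) \<le> T * (\<gamma> 0 - M * T)"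
      using T_pos by (intro mult_left_mono) auto
    with area_bounds(1)[OF Ch_admissible, of \<gamma>] that L(1) show ?thesis by auto
  qed
  then show "bdd_below (area ` L)" by (rule bdd_belowI2)
qed (auto simp: that)

lemma Ch_greatest_below:
  fixes \<Phi> :: "(real \<Rightarrow> real) \<Rightarrow> real"
  assumes \<Phi>_tendsto: "\<And>\<rho> \<eta>. (\<And>n. \<rho> n \<in> Ch) \<Longrightarrow> (\<And>t. (\<lambda>n. \<rho> n t) \<longlonglongrightarrow> \<eta> t) \<Longrightarrow> \<eta> \<in> Ch \<Longrightarrow>
      (\<lambda>n. \<Phi> (\<rho> n)) \<longlonglongrightarrow> \<Phi> \<eta>"
    and t0: "t0 \<ge> 0" and bound: "\<And>\<gamma>. \<gamma> \<in> Ch \<Longrightarrow> \<Phi> \<gamma> < x \<Longrightarrow> \<gamma> t0 \<le> c"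
    and avoid: "\<And>\<gamma>. \<gamma> \<in> Ch \<Longrightarrow> \<Phi> \<gamma> \<noteq> x" and ne: "\<exists>\<gamma>\<in>Ch. \<Phi> \<gamma> < x"
  obtains \<eta> where "\<eta> \<in> Ch" "\<Phi> \<eta> < x" "\<And>\<gamma>. \<gamma> \<in> Ch \<Longrightarrow> \<Phi> \<gamma> < x \<Longrightarrow> \<gamma> \<le> \<eta>"
proof -
  obtain \<eta> \<rho> where \<eta>: "\<eta> \<in> Ch" "\<And>\<gamma>. \<gamma> \<in> {\<gamma> \<in> Ch. \<Phi> \<gamma> < x} \<Longrightarrow> \<gamma> \<le> \<eta>"
    and \<rho>: "\<And>n. \<rho> n \<in> {\<gamma> \<in> Ch. \<Phi> \<gamma> < x}" and lim: "\<And>t. (\<lambda>n. \<rho> n t) \<longlonglongrightarrow> \<eta> t"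
    by (rule Ch_Sup[of "{\<gamma> \<in> Ch. \<Phi> \<gamma> < x}" t0 c]) (use t0 bound ne in auto)
  have "(\<lambda>n. \<Phi> (\<rho> n)) \<longlonglongrightarrow> \<Phi> \<eta>" using \<Phi>_tendsto[OF _ lim \<eta>(1)] \<rho> by blast
  then have "\<Phi> \<eta> \<le> x" by (rule LIMSEQ_le_const2) (use \<rho> in \<open>auto intro: less_imp_le\<close>)
  with avoid[OF \<eta>(1)] have "\<Phi> \<eta> < x" by simp
  with \<eta> show ?thesis using that by blast
qed

lemma Ch_least_above:
  fixes \<Phi> :: "(real \<Rightarrow> real) \<Rightarrow> real"
  assumes \<Phi>_tendsto: "\<And>\<rho> \<eta>. (\<And>n. \<rho> n \<in> Ch) \<Longrightarrow> (\<And>t. (\<lambda>n. \<rho> n t) \<longlonglongrightarrow> \<eta> t) \<Longrightarrow> \<eta> \<in> Ch \<Longrightarrow>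
      (\<lambda>n. \<Phi> (\<rho> n)) \<longlonglongrightarrow> \<Phi> \<eta>"
    and t0: "t0 \<ge> 0" and bound: "\<And>\<gamma>. \<gamma> \<in> Ch \<Longrightarrow> x < \<Phi> \<gamma> \<Longrightarrow> c \<le> \<gamma> t0"
    and avoid: "\<And>\<gamma>. \<gamma> \<in> Ch \<Longrightarrow> \<Phi> \<gamma> \<noteq> x" and ne: "\<exists>\<gamma>\<in>Ch. x < \<Phi> \<gamma>"
  obtains \<eta> where "\<eta> \<in> Ch" "x < \<Phi> \<eta>" "\<And>\<gamma>. \<gamma> \<in> Ch \<Longrightarrow> x < \<Phi> \<gamma> \<Longrightarrow> \<eta> \<le> \<gamma>"
proof -
  obtain \<eta> \<rho> where \<eta>: "\<eta> \<in> Ch" "\<And>\<gamma>. \<gamma> \<in> {\<gamma> \<in> Ch. x < \<Phi> \<gamma>} \<Longrightarrow> \<eta> \<le> \<gamma>"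
    and \<rho>: "\<And>n. \<rho> n \<in> {\<gamma> \<in> Ch. x < \<Phi> \<gamma>}" and lim: "\<And>t. (\<lambda>n. \<rho> n t) \<longlonglongrightarrow> \<eta> t"
    by (rule Ch_Inf[of "{\<gamma> \<in> Ch. x < \<Phi> \<gamma>}" t0 c]) (use t0 bound ne in auto)
  have "(\<lambda>n. \<Phi> (\<rho> n)) \<longlonglongrightarrow> \<Phi> \<eta>" using \<Phi>_tendsto[OF _ lim \<eta>(1)] \<rho> by blast
  then have "x \<le> \<Phi> \<eta>" by (rule LIMSEQ_le_const) (use \<rho> in \<open>auto intro: less_imp_le\<close>)
  with avoid[OF \<eta>(1)] have "x < \<Phi> \<eta>" by simp
  with \<eta> show ?thesis using that by blast
qed

text \<open>A cut of the maximal chain with a greatest element below and a least element above cannot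
  be crossed by an admissible curve: clamping the curve between the two would enlarge the chain.\<close>
lemma Ch_cut_not_crossed:
  assumes cut: "Ch = A \<union> B" and below: "\<And>\<gamma> \<eta>. \<gamma> \<in> A \<Longrightarrow> \<eta> \<in> B \<Longrightarrow> \<gamma> \<le> \<eta>"
    and lo: "A \<noteq> {} \<Longrightarrow> lo \<in> A \<and> (\<forall>\<gamma>\<in>A. \<gamma> \<le> lo) \<and> lo t < \<zeta> t"
    and hi: "B \<noteq> {} \<Longrightarrow> hi \<in> B \<and> (\<forall>\<gamma>\<in>B. hi \<le> \<gamma>) \<and> \<zeta> t < hi t"
    and \<zeta>: "admissible \<zeta>"
  shows False
proof -
  define \<xi>1 where "\<xi>1 = (if A = {} then \<zeta> else (\<lambda>s. max (\<zeta> s) (lo s)))"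
  define \<xi> where "\<xi> = (if B = {} then \<xi>1 else (\<lambda>s. min (\<xi>1 s) (hi s)))"
  have "admissible \<xi>1"
    using \<zeta> lo Ch_admissible cut by (auto simp: \<xi>1_def intro: admissible_max)
  then have adm: "admissible \<xi>"
    using hi Ch_admissible cut by (auto simp: \<xi>_def intro: admissible_min)
  have \<xi>_t: "\<xi> t = \<zeta> t" using lo hi by (auto simp: \<xi>_def \<xi>1_def)
  have "\<xi> \<in> Ch"
  proof (rule Ch_maximal[OF adm])
    fix \<gamma> assume "\<gamma> \<in> Ch"
    then consider "\<gamma> \<in> A" | "\<gamma> \<in> B" using cut by blast
    then show "\<gamma> \<le> \<xi> \<or> \<xi> \<le> \<gamma>"
    proof cases
      case 1
      then have "\<gamma> \<le> \<xi>1" using lo by (fastforce simp: \<xi>1_def le_fun_def intro: le_max_iff_disj[THEN iffD2])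
      moreover have "B \<noteq> {} \<Longrightarrow> \<gamma> \<le> hi" using below 1 hi by blast
      ultimately show ?thesis by (auto simp: \<xi>_def le_fun_def)
    next
      case 2
      then have "\<xi> \<le> hi" by (auto simp: \<xi>_def le_fun_def)
      with 2 hi show ?thesis by (blast intro: order_trans)
    qed
  qed
  then consider "\<xi> \<in> A" | "\<xi> \<in> B" using cut by blast
  then show False
  proof cases
    case 1
    with lo have "\<xi> t \<le> lo t" "lo t < \<zeta> t" by (auto simp: le_fun_def)
    with \<xi>_t show False by simp
  next
    case 2
    with hi have "hi t \<le> \<xi> t" "\<zeta> t < hi t" by (auto simp: le_fun_def)
    with \<xi>_t show False by simp
  qed
qed

lemma Ch_extremes_at:
  assumes t0: "t0 \<ge> 0" and avoid: "\<And>\<gamma>. \<gamma> \<in> Ch \<Longrightarrow> \<gamma> t0 \<noteq> x0"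
  obtains lo hi where
    "{\<gamma> \<in> Ch. \<gamma> t0 < x0} \<noteq> {} \<Longrightarrow> lo \<in> Ch \<and> lo t0 < x0 \<and> (\<forall>\<gamma>\<in>Ch. \<gamma> t0 < x0 \<longrightarrow> \<gamma> \<le> lo)"
    "{\<gamma> \<in> Ch. x0 < \<gamma> t0} \<noteq> {} \<Longrightarrow> hi \<in> Ch \<and> x0 < hi t0 \<and> (\<forall>\<gamma>\<in>Ch. x0 < \<gamma> t0 \<longrightarrow> hi \<le> \<gamma>)"
proof -
  obtain lo where "{\<gamma> \<in> Ch. \<gamma> t0 < x0} \<noteq> {} \<Longrightarrow>
      lo \<in> Ch \<and> lo t0 < x0 \<and> (\<forall>\<gamma>\<in>Ch. \<gamma> t0 < x0 \<longrightarrow> \<gamma> \<le> lo)"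
  proof (cases "{\<gamma> \<in> Ch. \<gamma> t0 < x0} = {}")
    case False
    obtain \<eta> where "\<eta> \<in> Ch" "\<eta> t0 < x0" "\<And>\<gamma>. \<gamma> \<in> Ch \<Longrightarrow> \<gamma> t0 < x0 \<Longrightarrow> \<gamma> \<le> \<eta>"
      by (rule Ch_greatest_below[of "\<lambda>\<gamma>. \<gamma> t0" t0 x0 x0]) (use False avoid t0 in auto)
    then show ?thesis using that by blast
  qed (use that in blast)
  moreover obtain hi where "{\<gamma> \<in> Ch. x0 < \<gamma> t0} \<noteq> {} \<Longrightarrow>
      hi \<in> Ch \<and> x0 < hi t0 \<and> (\<forall>\<gamma>\<in>Ch. x0 < \<gamma> t0 \<longrightarrow> hi \<le> \<gamma>)"
  proof (cases "{\<gamma> \<in> Ch. x0 < \<gamma> t0} = {}")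
    case False
    obtain \<eta> where "\<eta> \<in> Ch" "x0 < \<eta> t0" "\<And>\<gamma>. \<gamma> \<in> Ch \<Longrightarrow> x0 < \<gamma> t0 \<Longrightarrow> \<eta> \<le> \<gamma>"
      by (rule Ch_least_above[of "\<lambda>\<gamma>. \<gamma> t0" t0 x0 x0]) (use False avoid t0 in auto)
    then show ?thesis using that by blast
  qed (use that in blast)
  ultimately show ?thesis using that by blast
qed

lemma Ch_covers:
  assumes t0: "t0 \<ge> 0"
  shows "\<exists>\<gamma>\<in>Ch. \<gamma> t0 = x0"
proof (rule ccontr)
  assume "\<not> (\<exists>\<gamma>\<in>Ch. \<gamma> t0 = x0)"
  then have avoid: "\<And>\<gamma>. \<gamma> \<in> Ch \<Longrightarrow> \<gamma> t0 \<noteq> x0" by blast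
  define A where "A = {\<gamma> \<in> Ch. \<gamma> t0 < x0}"
  define B where "B = {\<gamma> \<in> Ch. x0 < \<gamma> t0}"
  have "\<gamma> \<in> A \<union> B" if "\<gamma> \<in> Ch" for \<gamma>
    using avoid[OF that] that by (auto simp: A_def B_def neq_iff)
  then have cut: "Ch = A \<union> B" by (auto simp: A_def B_def)
  have below: "\<gamma> \<le> \<eta>" if "\<gamma> \<in> A" "\<eta> \<in> B" for \<gamma> \<eta>
    using Ch_total[of \<gamma> \<eta>] that le_funD[of \<eta> \<gamma> t0] by (auto simp: A_def B_def)
  obtain lo hi where
    lo': "A \<noteq> {} \<Longrightarrow> lo \<in> Ch \<and> lo t0 < x0 \<and> (\<forall>\<gamma>\<in>Ch. \<gamma> t0 < x0 \<longrightarrow> \<gamma> \<le> lo)" and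
    hi': "B \<noteq> {} \<Longrightarrow> hi \<in> Ch \<and> x0 < hi t0 \<and> (\<forall>\<gamma>\<in>Ch. x0 < \<gamma> t0 \<longrightarrow> hi \<le> \<gamma>)"
    unfolding A_def B_def by (rule Ch_extremes_at[of t0 x0]) (use t0 avoid in blast)+
  have lo: "A \<noteq> {} \<Longrightarrow> lo \<in> A \<and> (\<forall>\<gamma>\<in>A. \<gamma> \<le> lo)" using lo' by (auto simp: A_def)
  have hi: "B \<noteq> {} \<Longrightarrow> hi \<in> B \<and> (\<forall>\<gamma>\<in>B. hi \<le> \<gamma>)" using hi' by (auto simp: B_def)
  define a where "a = (if A = {} then 1 else x0 - lo t0)"
  define b where "b = (if B = {} then 1 else hi t0 - x0)"
  define r where "r = min a b / (2 * (M + 1))"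
  have "a > 0" "b > 0" using lo hi by (auto simp: a_def b_def A_def B_def)
  then have "r > 0" and ra: "2 * (M + 1) * r \<le> a" and rb: "2 * (M + 1) * r \<le> b"
    using M_nonneg by (auto simp: r_def)
  have "(t0, x0) \<in> closure {(t, \<gamma> t) | t \<gamma>. 0 \<le> t \<and> admissible \<gamma>}" using dense t0 by auto
  then obtain t1 \<zeta> where \<zeta>: "t1 \<ge> 0" "admissible \<zeta>" and near: "dist (t1, \<zeta> t1) (t0, x0) < r"
    using \<open>r > 0\<close> unfolding closure_approachable by blast
  have t1: "\<bar>t1 - t0\<bar> < r" and x1: "\<bar>\<zeta> t1 - x0\<bar> < r"
    using near dist_fst_le[of "(t1, \<zeta> t1)" "(t0, x0)"] dist_snd_le[of "(t1, \<zeta> t1)" "(t0, x0)"]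
    by (auto simp: dist_real_def)
  have drift: "\<bar>\<gamma> t1 - \<gamma> t0\<bar> \<le> M * r" if "\<gamma> \<in> Ch" for \<gamma>
    using admissible_dist_le[OF Ch_admissible[OF that] t0 \<zeta>(1)] mult_left_mono[OF less_imp_le[OF t1] M_nonneg]
    by linarith
  have Mr: "0 \<le> M * r" "2 * (M + 1) * r = 2 * (M * r) + 2 * r"
    using M_nonneg \<open>r > 0\<close> by (simp_all add: algebra_simps)
  have "lo t1 < \<zeta> t1" if "A \<noteq> {}"
  proof -
    have "lo \<in> Ch" "a = x0 - lo t0" using lo that by (auto simp: a_def A_def)
    with drift[of lo] ra x1 Mr show ?thesis by (simp add: abs_le_iff abs_less_iff)
  qed
  moreover have "\<zeta> t1 < hi t1" if "B \<noteq> {}"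
  proof -
    have "hi \<in> Ch" "b = hi t0 - x0" using hi that by (auto simp: b_def B_def)
    with drift[of hi] rb x1 Mr show ?thesis by (simp add: abs_le_iff abs_less_iff)
  qed
  ultimately show False
    using lo hi by (intro Ch_cut_not_crossed[OF cut below, of lo t1 \<zeta> hi] \<zeta>(2)) blast+
qed

lemma Ch_area_surj: "\<exists>\<gamma>\<in>Ch. area \<gamma> = s"
proof (rule ccontr)
  assume "\<not> (\<exists>\<gamma>\<in>Ch. area \<gamma> = s)"
  then have avoid: "\<And>\<gamma>. \<gamma> \<in> Ch \<Longrightarrow> area \<gamma> \<noteq> s" by blast
  define A where "A = {\<gamma> \<in> Ch. area \<gamma> < s}"
  define B where "B = {\<gamma> \<in> Ch. s < area \<gamma>}"
  have "\<gamma> \<in> A \<union> B" if "\<gamma> \<in> Ch" for \<gamma>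
    using avoid[OF that] that by (auto simp: A_def B_def neq_iff)
  then have cut: "Ch = A \<union> B" by (auto simp: A_def B_def)
  have below: "\<gamma> \<le> \<eta>" if "\<gamma> \<in> A" "\<eta> \<in> B" for \<gamma> \<eta>
    using Ch_total[of \<gamma> \<eta>] area_mono[of \<eta> \<gamma>] Ch_admissible that by (force simp: A_def B_def)
  have area_bounds_Ch: "T * (\<gamma> 0 - M * T) \<le> area \<gamma>" "area \<gamma> \<le> T * (\<gamma> 0 + M * T)" if "\<gamma> \<in> Ch" for \<gamma>
    using area_bounds[OF Ch_admissible[OF that]] by simp_all
  obtain \<gamma>A \<gamma>B where "\<gamma>A \<in> Ch" "\<gamma>A 0 = s / T - M * T - 1" "\<gamma>B \<in> Ch" "\<gamma>B 0 = s / T + M * T + 1"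
    using Ch_covers[of 0] by (metis order_refl)
  then have "\<gamma>A \<in> A" "\<gamma>B \<in> B"
    using area_bounds_Ch[of \<gamma>A] area_bounds_Ch[of \<gamma>B] T_pos by (auto simp: A_def B_def field_simps)
  have area_tendsto_Ch: "(\<lambda>n. area (\<rho> n)) \<longlonglongrightarrow> area \<eta>"
    if "\<And>n. \<rho> n \<in> Ch" "\<And>t. (\<lambda>n. \<rho> n t) \<longlonglongrightarrow> \<eta> t" for \<rho> \<eta>
    using Ch_tendsto_area[OF that] by blast
  obtain lo where lo: "lo \<in> A" "\<And>\<gamma>. \<gamma> \<in> A \<Longrightarrow> \<gamma> \<le> lo"
  proof (rule Ch_greatest_below[of area 0 s "s / T + M * T", OF area_tendsto_Ch])
    show "\<gamma> 0 \<le> s / T + M * T" if "\<gamma> \<in> Ch" "area \<gamma> < s" for \<gamma>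
      using area_bounds_Ch(1)[OF that(1)] that(2) T_pos by (simp add: field_simps)
  qed (use avoid \<open>\<gamma>A \<in> A\<close> in \<open>auto simp: A_def\<close>)
  obtain hi where hi: "hi \<in> B" "\<And>\<gamma>. \<gamma> \<in> B \<Longrightarrow> hi \<le> \<gamma>"
  proof (rule Ch_least_above[of area 0 s "s / T - M * T", OF area_tendsto_Ch])
    show "s / T - M * T \<le> \<gamma> 0" if "\<gamma> \<in> Ch" "s < area \<gamma>" for \<gamma>
      using area_bounds_Ch(2)[OF that(1)] that(2) T_pos by (simp add: field_simps)
  qed (use avoid \<open>\<gamma>B \<in> B\<close> in \<open>auto simp: B_def\<close>)
  have "lo \<noteq> hi" using lo hi by (auto simp: A_def B_def)
  then obtain t where "lo t \<noteq> hi t" by (auto simp: fun_eq_iff)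
  with below[OF lo(1) hi(1)] have "lo t < hi t" by (auto simp: le_fun_def order_le_less)
  then have lt: "lo (max 0 t) < hi (max 0 t)"
    using lo(1) hi(1) Ch_admissible by (auto simp: A_def B_def admissible_max_0)
  obtain \<gamma> where \<gamma>: "\<gamma> \<in> Ch" "\<gamma> (max 0 t) = (lo (max 0 t) + hi (max 0 t)) / 2"
    using Ch_covers[of "max 0 t" "(lo (max 0 t) + hi (max 0 t)) / 2"] by auto
  show False
    using lo hi lt \<gamma> by (intro Ch_cut_not_crossed[OF cut below, of lo "max 0 t" \<gamma> hi] Ch_admissible) auto
qed

lemma Ch_area_inj: "\<gamma> \<in> Ch \<Longrightarrow> \<eta> \<in> Ch \<Longrightarrow> area \<gamma> = area \<eta> \<Longrightarrow> \<gamma> = \<eta>"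
  using Ch_total[of \<gamma> \<eta>] area_eq_imp_eq[of \<gamma> \<eta>] area_eq_imp_eq[of \<eta> \<gamma>] Ch_admissible by metis

definition param :: "real \<Rightarrow> real \<Rightarrow> real" where
  "param y = (THE \<gamma>. \<gamma> \<in> Ch \<and> area \<gamma> = y)"

lemma param: "param y \<in> Ch" "area (param y) = y"
proof -
  have "\<exists>!\<gamma>. \<gamma> \<in> Ch \<and> area \<gamma> = y" using Ch_area_surj[of y] Ch_area_inj by blast
  from theI'[OF this] show "param y \<in> Ch" "area (param y) = y" by (simp_all add: param_def)
qed

lemma param_area: "\<gamma> \<in> Ch \<Longrightarrow> param (area \<gamma>) = \<gamma>"
  using Ch_area_inj[OF param(1)] param(2) by blast

lemma param_mono: "y \<le> y' \<Longrightarrow> param y \<le> param y'"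
  using Ch_total[OF param(1) param(1), of y y'] area_mono[of "param y'" "param y"] param Ch_admissible
  by (metis antisym)

lemma continuous_on_param_at:
  assumes "t \<ge> 0"
  shows "continuous_on UNIV (\<lambda>y. param y t)"
proof (rule continuous_onI_mono)
  have "x \<in> range (\<lambda>y. param y t)" for x
    using Ch_covers[OF assms, of x] param_area by (metis rangeI)
  then show "open (range (\<lambda>y. param y t))" by (metis UNIV_eq_I open_UNIV)
qed (simp add: param_mono le_funD)

lemma lagrangian_param: "lagrangian_param f u (\<lambda>t y. param y t)"
  unfolding lagrangian_param_def
proof (intro conjI allI impI)
  show "continuous_on ({0..} \<times> UNIV) (\<lambda>(t, y). param y t)"
    using admissible_lipschitz[OF Ch_admissible[OF param(1)]] continuous_on_param_at
    by (intro continuous_on_Times_lipschitz_on_fst) auto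
  show "(\<lambda>(t, y). param y t) ` ({0..} \<times> UNIV) = UNIV"
  proof (intro set_eqI iffI)
    fix x :: real
    obtain \<gamma> where "\<gamma> \<in> Ch" "\<gamma> 0 = x" using Ch_covers[of 0 x] by auto
    then have "x = (\<lambda>(t, y). param y t) (0, area \<gamma>)" using param_area by simp
    then show "x \<in> (\<lambda>(t, y). param y t) ` ({0..} \<times> UNIV)" by (rule image_eqI) simp
  qed simp
  show "char_curve f u (\<lambda>t. param y t)" for y
    using Ch_admissible[OF param(1)] by (simp add: admissible_def classical_char_imp_char_curve)
  show "mono (\<lambda>y. param y t)" for t
    by (simp add: monoI param_mono le_funD)
qed

lemma lipschitz_along_param: "lipschitz_on G {0..} (\<lambda>t. u t (param y t))"
  using Ch_admissible[OF param(1)] by (simp add: admissible_def)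

end

section \<open>The Lagrangian parameterization\<close>

lemma C2_imp_continuous_deriv:
  assumes "C2 f"
  shows "continuous_on UNIV (deriv f)"
proof -
  obtain f' f'' where f': "\<And>x. (f has_real_derivative f' x) (at x)"
    and f'': "\<And>x. (f' has_real_derivative f'' x) (at x)"
    using assms unfolding C2_def by blast
  have "deriv f = f'" using f' by (auto intro: DERIV_imp_deriv)
  moreover have "continuous_on UNIV f'"
    using f'' by (intro continuous_at_imp_continuous_on) (blast intro: DERIV_isCont)
  ultimately show ?thesis by simp
qed

lemma continuous_bounded_on_compact_support:
  fixes u :: "real \<Rightarrow> real \<Rightarrow> real"
  assumes cont: "continuous_on ({0..} \<times> UNIV) (\<lambda>(t, x). u t x)"
    and supp: "compact (closure {(t, x) \<in> {0..} \<times> UNIV. u t x \<noteq> 0})"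
  obtains T B where "T > 0" "\<And>t x. t \<ge> T \<Longrightarrow> u t x = 0" "\<And>t x. t \<ge> 0 \<Longrightarrow> \<bar>u t x\<bar> \<le> B"
proof -
  define K where "K = closure {(t, x) \<in> {0..} \<times> UNIV. u t x \<noteq> 0}"
  have "K \<subseteq> {0..} \<times> UNIV"
    unfolding K_def by (rule closure_minimal) (auto intro: closed_Times)
  with supp have K: "compact K" "K \<subseteq> {0..} \<times> UNIV" by (simp_all add: K_def)
  have in_K: "(t, x) \<in> K" if "t \<ge> 0" "u t x \<noteq> 0" for t x
    using that closure_subset by (fastforce simp: K_def)
  obtain B where B: "\<And>p. p \<in> K \<Longrightarrow> \<bar>(\<lambda>(t, x). u t x) p\<bar> \<le> B"
    using compact_imp_bounded[OF compact_continuous_image[OF continuous_on_subset[OF cont K(2)] K(1)]]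
    by (force simp: bounded_iff)
  obtain R where R: "\<And>p. p \<in> K \<Longrightarrow> norm p \<le> R"
    using compact_imp_bounded[OF K(1)] by (auto simp: bounded_iff)
  show ?thesis
  proof (rule that[of "\<bar>R\<bar> + 1" "\<bar>B\<bar>"])
    show "\<bar>R\<bar> + 1 > 0" by simp
    show "u t x = 0" if "t \<ge> \<bar>R\<bar> + 1" for t x
    proof (rule ccontr)
      assume "u t x \<noteq> 0"
      with that have "norm (t, x) \<le> R" by (intro R in_K) auto
      with that norm_fst_le[of t x] show False by simp
    qed
    show "\<bar>u t x\<bar> \<le> \<bar>B\<bar>" if "t \<ge> 0" for t x
      using B[OF in_K[OF that, of x]] abs_ge_self[of B] by (cases "u t x = 0") auto
  qed
qed

theorem lemma1p4:
  fixes f :: "real \<Rightarrow> real" and u :: "real \<Rightarrow> real \<Rightarrow> real" and G :: real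
    and D :: "(real \<times> real) set"
  assumes "C2 f"
    and "G > 0"
    and "continuous_on ({0..} \<times> UNIV) (\<lambda>(t,x). u t x)"
    and "compact (closure {(t,x) \<in> {0..} \<times> UNIV. u t x \<noteq> 0})"
    and "D \<subseteq> {0..} \<times> UNIV"
    and "{0..} \<times> UNIV \<subseteq> closure D"
    and "\<forall>(t,x) \<in> D. \<exists>\<gamma>. char_curve f u \<gamma> \<and> \<gamma> t = x \<and>
                        lipschitz_on G {0..} (\<lambda>s. u s (\<gamma> s))"
  shows "\<exists>X. lagrangian_param f u X \<and> (\<forall>y. lipschitz_on G {0..} (\<lambda>t. u t (X t y)))"
proof -
  have deriv_f: "continuous_on UNIV (deriv f)" using assms(1) by (rule C2_imp_continuous_deriv)
  obtain T B where T: "T > 0" "\<And>t x. t \<ge> T \<Longrightarrow> u t x = 0"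
    and B: "\<And>t x. t \<ge> 0 \<Longrightarrow> \<bar>u t x\<bar> \<le> B"
    using continuous_bounded_on_compact_support[OF assms(3,4)] by metis
  have "compact (deriv f ` {-B..B})"
    by (rule compact_continuous_image[OF continuous_on_subset[OF deriv_f]]) auto
  then obtain M where M: "\<forall>v\<in>{-B..B}. \<bar>deriv f v\<bar> \<le> M"
    using compact_imp_bounded[of "deriv f ` {-B..B}"] unfolding bounded_iff by auto
  interpret characteristics f u G M T
  proof unfold_locales
    show "\<bar>deriv f (u t x)\<bar> \<le> M" if "t \<ge> 0" for t x
      using M B[OF that, of x] by (simp add: abs_le_iff)
  qed (use deriv_f assms(3) T in auto)
  obtain Ch where "pred_on.maxchain {\<gamma>. admissible \<gamma>} (<) Ch"
    using pred_on.Hausdorff by blast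
  then interpret characteristics_maxchain f u G M T Ch
    using dense_admissible[OF assms(5-7)] by unfold_locales
  show ?thesis using lagrangian_param lipschitz_along_param by blast
qed

end
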